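(* Let $\Lambda(s,t)\in SO(3)$ and $\boldsymbol{r}(s,t)\in\mathbb{R}^3$ for $s\in[0,L]$ and time $t$, and let $l(\boldsymbol{\omega},\boldsymbol{\gamma},\boldsymbol{\Omega},\boldsymbol{\Gamma},\boldsymbol{\rho})$ be a Lagrangian depending on $\mathbb{R}^3$-valued functions of $s$ (where $\omega=\widehat{\boldsymbol{\omega}}$, $\Omega=\widehat{\boldsymbol{\Omega}}\in\mathfrak{so}(3)$). Consider the action $$S=\int l(\boldsymbol{\omega},\boldsymbol{\gamma},\boldsymbol{\Omega},\boldsymbol{\Gamma},\boldsymbol{\rho})\,dt+\iint\Big(\boldsymbol{\pi}\cdot(\Lambda^{-1}\dot\Lambda-\omega)+\boldsymbol{\Pi}\cdot(\Lambda^{-1}\Lambda'-\Omega)+\mathbf{R}\cdot(\Lambda^{-1}\boldsymbol{r}-\boldsymbol{\rho})+\boldsymbol{\mu}\cdot(\Lambda^{-1}\dot{\boldsymbol{r}}-\boldsymbol{\gamma})+\mathbf{M}\cdot(\Lambda^{-1}\boldsymbol{r}'-\boldsymbol{\Gamma})\Big)\,ds\,dt,$$ with $\mathbb{R}^3$-valued Lagrange multipliers $\boldsymbol{\pi},\boldsymbol{\Pi},\mathbf{R},\boldsymbol{\mu},\mathbf{M}$, where elements of $\mathfrak{so}(3)$ are identified with vectors in $\mathbb{R}^3$ via the hat map in the dot products. Then the equations arising from the variational principle $\delta S=0$ (with respect to variations of $\Lambda,\boldsymbol{r}$, of $\boldsymbol{\omega},\boldsymbol{\gamma},\boldsymbol{\Omega},\boldsymbol{\Gamma},\boldsymbol{\rho}$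 and of the multipliers) are $$\frac{\delta l}{\delta\boldsymbol{\rho}}-\mathbf{R}=0,\quad \frac{\delta l}{\delta\boldsymbol{\omega}}-\boldsymbol{\pi}=0,\quad \frac{\delta l}{\delta\boldsymbol{\Omega}}-\boldsymbol{\Pi}=0,\quad \frac{\delta l}{\delta\boldsymbol{\gamma}}-\boldsymbol{\mu}=0,\quad \frac{\delta l}{\delta\boldsymbol{\Gamma}}-\mathbf{M}=0,$$ $$\dot{\boldsymbol{\pi}}+\boldsymbol{\omega}\times\boldsymbol{\pi}+\boldsymbol{\Pi}'+\boldsymbol{\Omega}\times\boldsymbol{\Pi}+\boldsymbol{\gamma}\times\boldsymbol{\mu}+\boldsymbol{\Gamma}\times\mathbf{M}+\boldsymbol{\rho}\times\mathbf{R}=0,$$ $$\dot{\boldsymbol{\mu}}+\boldsymbol{\omega}\times\boldsymbol{\mu}+\mathbf{M}'+\boldsymbol{\Omega}\times\mathbf{M}-\mathbf{R}=0,$$ together with the constraints $\Lambda^{-1}\dot\Lambda=\omega$, $\Lambda^{-1}\Lambda'=\Omega$, $\Lambda^{-1}\boldsymbol{r}=\boldsymbol{\rho}$, $\Lambda^{-1}\dot{\boldsymbol{r}}=\boldsymbol{\gamma}$, $\Lambda^{-1}\boldsymbol{r}'=\boldsymbol{\Gamma}$.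
   Context: Prime denotes $\partial_s$ and dot denotes $\partial_t$. The hat map $\widehat{\cdot}:\mathbb{R}^3\to\mathfrak{so}(3)$ is the Lie algebra isomorphism defined by $\widehat{\boldsymbol{u}}\boldsymbol{v}=\boldsymbol{u}\times\boldsymbol{v}$. $\delta l/\delta(\cdot)$ denote functional derivatives with respect to the $L^2$ pairing in $s$, regarded as $\mathbb{R}^3$-valued. *)

theory Defs
  imports "HOL-Analysis.Analysis"
begin

type_synonym vec3 = "real^3"
type_synonym mat3 = "real^3^3"
text \<open>A field on the (s,t)-plane: first argument is the arclength s, second the time t.\<close>
type_synonym 'a field = "real \<Rightarrow> real \<Rightarrow> 'a"

text \<open>Hat map R^3 -> so(3):  hat u *v v = u \<times> v.\<close>
definition hat :: "vec3 \<Rightarrow> mat3" where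
  "hat u = vector [vector [0, - u$3, u$2], vector [u$3, 0, - u$1], vector [- u$2, u$1, 0]]"

definition vee :: "mat3 \<Rightarrow> vec3" where
  "vee A = vector [A$3$2, A$1$3, A$2$1]"

text \<open>Exponential map so(3) -> SO(3) (Rodrigues formula), used to generate variations of Lambda.\<close>
definition so3_exp :: "vec3 \<Rightarrow> mat3" where
  "so3_exp v = mat 1 + (sin (norm v) / norm v) *\<^sub>R hat v
                     + ((1 - cos (norm v)) / (norm v)^2) *\<^sub>R (hat v ** hat v)"

text \<open>Partial derivatives: dot = d/dt, prime = d/ds.\<close>
definition pt :: "'a::real_normed_vector field \<Rightarrow> 'a field" where
  "pt F = (\<lambda>s t. vector_derivative (\<lambda>\<tau>. F s \<tau>) (at t))"

definition ps :: "'a::real_normed_vector field \<Rightarrow> 'a field" where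
  "ps F = (\<lambda>s t. vector_derivative (\<lambda>\<sigma>. F \<sigma> t) (at s))"

definition cont_field :: "'a::real_normed_vector field \<Rightarrow> bool" where
  "cont_field F \<longleftrightarrow> continuous_on UNIV (\<lambda>(s,t). F s t)"

definition C1_field :: "'a::real_normed_vector field \<Rightarrow> bool" where
  "C1_field F \<longleftrightarrow> cont_field F
     \<and> (\<forall>s t. (\<lambda>\<tau>. F s \<tau>) differentiable (at t) \<and> (\<lambda>\<sigma>. F \<sigma> t) differentiable (at s))
     \<and> cont_field (pt F) \<and> cont_field (ps F)"

definition test_field :: "real \<Rightarrow> real \<Rightarrow> real \<Rightarrow> 'a::real_normed_vector field \<Rightarrow> bool" where
  "test_field L T0 T1 F \<longleftrightarrow> C1_field F \<and>
     (\<exists>K. compact K \<and> K \<subseteq> box (0, T0) (L, T1) \<and> (\<forall>s t. (s, t) \<notin> K \<longrightarrow> F s t = 0))"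

type_synonym sfun = "real \<Rightarrow> vec3"
type_synonym lagr = "sfun \<Rightarrow> sfun \<Rightarrow> sfun \<Rightarrow> sfun \<Rightarrow> sfun \<Rightarrow> real"
type_synonym lagr_deriv = "sfun \<Rightarrow> sfun \<Rightarrow> sfun \<Rightarrow> sfun \<Rightarrow> sfun \<Rightarrow> sfun"

text \<open>dw,dg,dW,dG,dr are the functional derivatives of l (w.r.t. the L^2 pairing on [0,L])
  in its five arguments omega, gamma, Omega, Gamma, rho.\<close>
definition functional_derivs :: "real \<Rightarrow> lagr \<Rightarrow> lagr_deriv \<Rightarrow> lagr_deriv \<Rightarrow> lagr_deriv
    \<Rightarrow> lagr_deriv \<Rightarrow> lagr_deriv \<Rightarrow> bool" where
  "functional_derivs L l dw dg dW dG dr \<longleftrightarrow>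
    (\<forall>w g W G r \<eta>. continuous_on {0..L} \<eta> \<longrightarrow>
      ((\<lambda>\<epsilon>. l (\<lambda>s. w s + \<epsilon> *\<^sub>R \<eta> s) g W G r) has_real_derivative
          integral {0..L} (\<lambda>s. dw w g W G r s \<bullet> \<eta> s)) (at 0) \<and>
      ((\<lambda>\<epsilon>. l w (\<lambda>s. g s + \<epsilon> *\<^sub>R \<eta> s) W G r) has_real_derivative
          integral {0..L} (\<lambda>s. dg w g W G r s \<bullet> \<eta> s)) (at 0) \<and>
      ((\<lambda>\<epsilon>. l w g (\<lambda>s. W s + \<epsilon> *\<^sub>R \<eta> s) G r) has_real_derivative
          integral {0..L} (\<lambda>s. dW w g W G r s \<bullet> \<eta> s)) (at 0) \<and>
      ((\<lambda>\<epsilon>. l w g W (\<lambda>s. G s + \<epsilon> *\<^sub>R \<eta> s) r) has_real_derivative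
          integral {0..L} (\<lambda>s. dG w g W G r s \<bullet> \<eta> s)) (at 0) \<and>
      ((\<lambda>\<epsilon>. l w g W G (\<lambda>s. r s + \<epsilon> *\<^sub>R \<eta> s)) has_real_derivative
          integral {0..L} (\<lambda>s. dr w g W G r s \<bullet> \<eta> s)) (at 0))"

definition lag_int :: "real \<Rightarrow> real \<Rightarrow> lagr \<Rightarrow> vec3 field \<Rightarrow> vec3 field \<Rightarrow> vec3 field
    \<Rightarrow> vec3 field \<Rightarrow> vec3 field \<Rightarrow> real" where
  "lag_int T0 T1 l w g W G r =
     integral {T0..T1} (\<lambda>t. l (\<lambda>s. w s t) (\<lambda>s. g s t) (\<lambda>s. W s t) (\<lambda>s. G s t) (\<lambda>s. r s t))"

definition dint :: "real \<Rightarrow> real \<Rightarrow> real \<Rightarrow> real field \<Rightarrow> real" where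
  "dint L T0 T1 f = integral {T0..T1} (\<lambda>t. integral {0..L} (\<lambda>s. f s t))"

text \<open>Regularity hypothesis: at the given fields, differentiation under the time integral of
  the Lagrangian is permitted along admissible variations of each argument.\<close>
definition diff_under_int :: "real \<Rightarrow> real \<Rightarrow> real \<Rightarrow> lagr \<Rightarrow> lagr_deriv \<Rightarrow> lagr_deriv
    \<Rightarrow> lagr_deriv \<Rightarrow> lagr_deriv \<Rightarrow> lagr_deriv
    \<Rightarrow> vec3 field \<Rightarrow> vec3 field \<Rightarrow> vec3 field \<Rightarrow> vec3 field \<Rightarrow> vec3 field \<Rightarrow> bool" where
  "diff_under_int L T0 T1 l dw dg dW dG dr w g W G r \<longleftrightarrow>
    (\<forall>\<eta>. test_field L T0 T1 \<eta> \<longrightarrow>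
      (let D = (\<lambda>d. dint L T0 T1 (\<lambda>s t. d (\<lambda>s. w s t) (\<lambda>s. g s t) (\<lambda>s. W s t) (\<lambda>s. G s t) (\<lambda>s. r s t) s \<bullet> \<eta> s t)) in
      ((\<lambda>\<epsilon>. lag_int T0 T1 l (\<lambda>s t. w s t + \<epsilon> *\<^sub>R \<eta> s t) g W G r) has_real_derivative D dw) (at 0) \<and>
      ((\<lambda>\<epsilon>. lag_int T0 T1 l w (\<lambda>s t. g s t + \<epsilon> *\<^sub>R \<eta> s t) W G r) has_real_derivative D dg) (at 0) \<and>
      ((\<lambda>\<epsilon>. lag_int T0 T1 l w g (\<lambda>s t. W s t + \<epsilon> *\<^sub>R \<eta> s t) G r) has_real_derivative D dW) (at 0) \<and>
      ((\<lambda>\<epsilon>. lag_int T0 T1 l w g W (\<lambda>s t. G s t + \<epsilon> *\<^sub>R \<eta> s t) r) has_real_derivative D dG) (at 0) \<and>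
      ((\<lambda>\<epsilon>. lag_int T0 T1 l w g W G (\<lambda>s t. r s t + \<epsilon> *\<^sub>R \<eta> s t)) has_real_derivative D dr) (at 0)))"

text \<open>The action S. Arguments: Lambda, r, omega, gamma, Omega, Gamma, rho, pi, Pi, R, mu, M.\<close>
definition action :: "real \<Rightarrow> real \<Rightarrow> real \<Rightarrow> lagr \<Rightarrow> mat3 field \<Rightarrow> vec3 field
    \<Rightarrow> vec3 field \<Rightarrow> vec3 field \<Rightarrow> vec3 field \<Rightarrow> vec3 field \<Rightarrow> vec3 field
    \<Rightarrow> vec3 field \<Rightarrow> vec3 field \<Rightarrow> vec3 field \<Rightarrow> vec3 field \<Rightarrow> vec3 field \<Rightarrow> real" where
  "action L T0 T1 l \<Lambda> x w g W G \<rho> \<pi> Pm R \<mu> M =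
     lag_int T0 T1 l w g W G \<rho> +
     dint L T0 T1 (\<lambda>s t.
         \<pi> s t \<bullet> (vee (matrix_inv (\<Lambda> s t) ** pt \<Lambda> s t) - w s t)
       + Pm s t \<bullet> (vee (matrix_inv (\<Lambda> s t) ** ps \<Lambda> s t) - W s t)
       + R s t \<bullet> (matrix_inv (\<Lambda> s t) *v x s t - \<rho> s t)
       + \<mu> s t \<bullet> (matrix_inv (\<Lambda> s t) *v pt x s t - g s t)
       + M s t \<bullet> (matrix_inv (\<Lambda> s t) *v ps x s t - G s t))"

text \<open>The variational principle \<delta>S = 0: the first variation of S vanishes along every admissible
  variation of each of the fields (Lambda varied as Lambda exp(\<epsilon> hat Sigma), all others linearly).\<close>
definition stationary :: "real \<Rightarrow> real \<Rightarrow> real \<Rightarrow> lagr \<Rightarrow> mat3 field \<Rightarrow> vec3 field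
    \<Rightarrow> vec3 field \<Rightarrow> vec3 field \<Rightarrow> vec3 field \<Rightarrow> vec3 field \<Rightarrow> vec3 field
    \<Rightarrow> vec3 field \<Rightarrow> vec3 field \<Rightarrow> vec3 field \<Rightarrow> vec3 field \<Rightarrow> vec3 field \<Rightarrow> bool" where
  "stationary L T0 T1 l \<Lambda> x w g W G \<rho> \<pi> Pm R \<mu> M \<longleftrightarrow>
    (\<forall>\<eta> :: vec3 field. test_field L T0 T1 \<eta> \<longrightarrow>
      (let V = (\<lambda>f. \<lambda>\<epsilon>::real. \<lambda>s t. f s t + \<epsilon> *\<^sub>R \<eta> s t);
           S = action L T0 T1 l in
       ((\<lambda>\<epsilon>. S (\<lambda>s t. \<Lambda> s t ** so3_exp (\<epsilon> *\<^sub>R \<eta> s t)) x w g W G \<rho> \<pi> Pm R \<mu> M) has_real_derivative 0) (at 0) \<and>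
       ((\<lambda>\<epsilon>. S \<Lambda> (V x \<epsilon>) w g W G \<rho> \<pi> Pm R \<mu> M) has_real_derivative 0) (at 0) \<and>
       ((\<lambda>\<epsilon>. S \<Lambda> x (V w \<epsilon>) g W G \<rho> \<pi> Pm R \<mu> M) has_real_derivative 0) (at 0) \<and>
       ((\<lambda>\<epsilon>. S \<Lambda> x w (V g \<epsilon>) W G \<rho> \<pi> Pm R \<mu> M) has_real_derivative 0) (at 0) \<and>
       ((\<lambda>\<epsilon>. S \<Lambda> x w g (V W \<epsilon>) G \<rho> \<pi> Pm R \<mu> M) has_real_derivative 0) (at 0) \<and>
       ((\<lambda>\<epsilon>. S \<Lambda> x w g W (V G \<epsilon>) \<rho> \<pi> Pm R \<mu> M) has_real_derivative 0) (at 0) \<and>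
       ((\<lambda>\<epsilon>. S \<Lambda> x w g W G (V \<rho> \<epsilon>) \<pi> Pm R \<mu> M) has_real_derivative 0) (at 0) \<and>
       ((\<lambda>\<epsilon>. S \<Lambda> x w g W G \<rho> (V \<pi> \<epsilon>) Pm R \<mu> M) has_real_derivative 0) (at 0) \<and>
       ((\<lambda>\<epsilon>. S \<Lambda> x w g W G \<rho> \<pi> (V Pm \<epsilon>) R \<mu> M) has_real_derivative 0) (at 0) \<and>
       ((\<lambda>\<epsilon>. S \<Lambda> x w g W G \<rho> \<pi> Pm (V R \<epsilon>) \<mu> M) has_real_derivative 0) (at 0) \<and>
       ((\<lambda>\<epsilon>. S \<Lambda> x w g W G \<rho> \<pi> Pm R (V \<mu> \<epsilon>) M) has_real_derivative 0) (at 0) \<and>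
       ((\<lambda>\<epsilon>. S \<Lambda> x w g W G \<rho> \<pi> Pm R \<mu> (V M \<epsilon>)) has_real_derivative 0) (at 0)))"

end

theory Submission
  imports Defs
begin

text \<open>Every admissible variation of the action has a first variation \<open>\<integral>\<integral> K \<bullet> \<eta>\<close> with a
  continuous field \<open>K\<close>. For a multiplier, \<open>K\<close> is the residual of the constraint it enforces; for
  \<open>\<omega>, \<gamma>, \<Omega>, \<Gamma>, \<rho>\<close> it is the functional derivative of \<open>l\<close> minus the conjugate multiplier; for \<open>r\<close>,
  and for \<open>\<Lambda>\<close> varied as \<open>\<Lambda> exp(\<epsilon> hat \<eta>)\<close>, it is found by integrating by parts, the test fields
  vanishing on the boundary. In the variation of \<open>\<Lambda>\<close> the integrand simplifies by the constraints,
  which the multiplier variations impose, and the cross products come from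
  \<open>[hat \<omega>, hat \<eta>] = hat (\<omega> \<times> \<eta>)\<close>. By the fundamental lemma of the calculus of variations, tested
  against products of bump functions, a first variation vanishes for all \<open>\<eta>\<close> iff \<open>K\<close> vanishes on the
  closed rectangle.

  Differentiating under the integral sign along \<open>\<Lambda> exp(\<epsilon> hat \<eta>)\<close> needs an \<open>\<epsilon>\<close>-derivative of the
  integrand that is jointly continuous in \<open>\<epsilon>, s, t\<close>. It is obtained by writing the Rodrigues
  coefficients \<open>sin r / r\<close> and \<open>(1 - cos r) / r\<^sup>2\<close> as entire power series in \<open>r\<^sup>2\<close>.\<close>

section \<open>The hat map\<close>

lemma hat_nth:
  "hat u $ i $ j = (if i = 1 then (if j = 1 then 0 else if j = 2 then - u$3 else u$2)
     else if i = 2 then (if j = 1 then u$3 else if j = 2 then 0 else - u$1)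
     else (if j = 1 then - u$2 else if j = 2 then u$1 else 0))"
  using exhaust_3[of i] exhaust_3[of j] by (auto simp add: hat_def)

lemma hat_mult_vector: "hat u *v v = cross3 u v"
  by (simp add: hat_nth cross3_def vec_eq_iff forall_3 matrix_vector_mult_def sum_3 algebra_simps)

lemma linear_hat: "linear hat"
  by (rule linearI) (simp_all add: vec_eq_iff forall_3 hat_nth)

lemma linear_vee: "linear vee"
  by (rule linearI) (simp_all add: vec_eq_iff forall_3 vee_def)

lemma bounded_linear_hat: "bounded_linear hat"
  using linear_hat linear_conv_bounded_linear by blast

lemma bounded_linear_vee: "bounded_linear vee"
  using linear_vee linear_conv_bounded_linear by blast

lemma hat_zero [simp]: "hat 0 = 0"
  and hat_add [simp]: "hat (u + v) = hat u + hat v"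
  and hat_diff [simp]: "hat (u - v) = hat u - hat v"
  and hat_minus [simp]: "hat (- u) = - hat u"
  and hat_scaleR [simp]: "hat (c *\<^sub>R u) = c *\<^sub>R hat u"
  using linear_hat by (simp_all add: linear_0 linear_add linear_diff linear_neg linear_cmul)

lemma vee_add [simp]: "vee (X + Y) = vee X + vee Y"
  and vee_diff [simp]: "vee (X - Y) = vee X - vee Y"
  and vee_minus [simp]: "vee (- X) = - vee X"
  using linear_vee by (simp_all add: linear_add linear_diff linear_neg)

lemma vee_hat [simp]: "vee (hat u) = u"
  by (simp add: vec_eq_iff forall_3 vee_def hat_nth)

lemma hat_vee:
  assumes "transpose A = - (A :: mat3)"
  shows "hat (vee A) = A"
proof -
  have antisym: "A $ j $ i = - A $ i $ j" for i j
    using arg_cong[OF assms, of "\<lambda>M. M $ i $ j"] by (simp add: transpose_def)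
  have "A $ i $ i = 0" for i
    using antisym[of i i] by simp
  then show ?thesis
    by (simp add: vec_eq_iff forall_3 hat_nth vee_def antisym[of 1 2] antisym[of 1 3] antisym[of 2 3])
qed

lemma transpose_hat [simp]: "transpose (hat a) = - hat a"
  by (simp add: vec_eq_iff forall_3 transpose_def hat_nth)

lemma vee_hat_commutator: "vee (hat w ** hat a) - vee (hat a ** hat w) = cross3 w a"
  by (simp add: vec_eq_iff forall_3 vee_def matrix_matrix_mult_def sum_3 hat_nth cross3_def
      algebra_simps)

section \<open>Calculus of matrix-valued functions\<close>

lemma matrix_add_rdistrib: "(A + B) ** C = A ** C + B ** (C :: real^'p^'n)"
  by (simp add: vec_eq_iff matrix_matrix_mult_def sum.distrib algebra_simps)

lemma bounded_bilinear_matrix_matrix_mult: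
  "bounded_bilinear ((**) :: real^'n^'m \<Rightarrow> real^'p^'n \<Rightarrow> real^'p^'m)"
proof -
  have "bilinear ((**) :: real^'n^'m \<Rightarrow> real^'p^'n \<Rightarrow> real^'p^'m)"
    by (simp add: bilinear_def linear_iff matrix_add_ldistrib matrix_add_rdistrib
        matrix_scalar_ac scalar_matrix_assoc)
  then show ?thesis using bilinear_conv_bounded_bilinear by blast
qed

lemma bounded_bilinear_matrix_vector_mult:
  "bounded_bilinear ((*v) :: real^'n^'m \<Rightarrow> real^'n \<Rightarrow> real^'m)"
proof -
  have "bilinear ((*v) :: real^'n^'m \<Rightarrow> real^'n \<Rightarrow> real^'m)"
    by (simp add: bilinear_def linear_iff matrix_vector_mult_add_rdistrib
        matrix_vector_right_distrib matrix_scaleR_vector_ac scaleR_matrix_vector_assoc)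
  then show ?thesis using bilinear_conv_bounded_bilinear by blast
qed

lemma bounded_linear_transpose: "bounded_linear (transpose :: real^'n^'m \<Rightarrow> real^'m^'n)"
proof -
  have "linear (transpose :: real^'n^'m \<Rightarrow> real^'m^'n)"
    by (rule linearI) (simp_all add: vec_eq_iff transpose_def)
  then show ?thesis using linear_conv_bounded_linear by blast
qed

lemma matrix_mult_minus_left [simp]: "(- X) ** (Y :: real^'p^'n) = - (X ** Y :: real^'p^'m)"
  and matrix_mult_minus_right [simp]: "X1 ** (- Y1 :: real^'p^'n) = - (X1 ** Y1 :: real^'p^'m)"
  and matrix_mult_zero_right [simp]: "X2 ** (0 :: real^'p^'n) = (0 :: real^'p^'m)"
  and matrix_mult_zero_left [simp]: "(0 :: real^'n^'m) ** (X3 :: real^'p^'n) = 0"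
  and matrix_vector_mult_minus_left [simp]: "(- X4) *v (y :: real^'n) = - (X4 *v y :: real^'m)"
  by (simp_all add: bounded_bilinear.minus_left bounded_bilinear.minus_right
      bounded_bilinear.zero_right bounded_bilinear.zero_left bounded_bilinear_matrix_matrix_mult
      bounded_bilinear_matrix_vector_mult)

lemma continuous_on_matrix_matrix_mult [continuous_intros]:
  "continuous_on A f \<Longrightarrow> continuous_on A g \<Longrightarrow>
     continuous_on A (\<lambda>x. (f x :: real^'n^'m) ** (g x :: real^'p^'n))"
  by (rule bounded_bilinear.continuous_on[OF bounded_bilinear_matrix_matrix_mult])

lemma continuous_on_matrix_vector_mult [continuous_intros]:
  "continuous_on A f \<Longrightarrow> continuous_on A g \<Longrightarrow>
     continuous_on A (\<lambda>x. (f x :: real^'n^'m) *v (g x :: real^'n))"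
  by (rule bounded_bilinear.continuous_on[OF bounded_bilinear_matrix_vector_mult])

lemma continuous_on_cross3 [continuous_intros]:
  "continuous_on A f \<Longrightarrow> continuous_on A g \<Longrightarrow> continuous_on A (\<lambda>x. cross3 (f x) (g x))"
  by (rule bounded_bilinear.continuous_on[OF bilinear_cross[unfolded bilinear_conv_bounded_bilinear]])

lemma continuous_on_hat [continuous_intros]:
  "continuous_on A f \<Longrightarrow> continuous_on A (\<lambda>x. hat (f x))"
  by (rule bounded_linear.continuous_on[OF bounded_linear_hat])

lemma continuous_on_vee [continuous_intros]:
  "continuous_on A f \<Longrightarrow> continuous_on A (\<lambda>x. vee (f x))"
  by (rule bounded_linear.continuous_on[OF bounded_linear_vee])

lemma continuous_on_transpose [continuous_intros]:
  "continuous_on A f \<Longrightarrow> continuous_on A (\<lambda>x. transpose (f x :: real^'n^'m))"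
  by (rule bounded_linear.continuous_on[OF bounded_linear_transpose])

lemma has_derivative_hat [derivative_intros]:
  "(g has_derivative g') F \<Longrightarrow> ((\<lambda>x. hat (g x)) has_derivative (\<lambda>h. hat (g' h))) F"
  by (rule bounded_linear.has_derivative[OF bounded_linear_hat])

lemma has_derivative_matrix_matrix_mult [derivative_intros]:
  "(f has_derivative f') (at x within s) \<Longrightarrow> (g has_derivative g') (at x within s) \<Longrightarrow>
   ((\<lambda>x. (f x :: real^'n^'m) ** (g x :: real^'p^'n)) has_derivative
      (\<lambda>h. f x ** g' h + f' h ** g x)) (at x within s)"
  by (rule bounded_bilinear.FDERIV[OF bounded_bilinear_matrix_matrix_mult])

lemma has_vector_derivative_matrix_matrix_mult [derivative_intros]:
  "(f has_vector_derivative f') (at x within s) \<Longrightarrow> (g has_vector_derivative g') (at x within s) \<Longrightarrow>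
   ((\<lambda>x. (f x :: real^'n^'m) ** (g x :: real^'p^'n)) has_vector_derivative
      (f x ** g' + f' ** g x)) (at x within s)"
  by (rule bounded_bilinear.has_vector_derivative[OF bounded_bilinear_matrix_matrix_mult])

lemma has_vector_derivative_matrix_vector_mult [derivative_intros]:
  "(f has_vector_derivative f') (at x within s) \<Longrightarrow> (g has_vector_derivative g') (at x within s) \<Longrightarrow>
   ((\<lambda>x. (f x :: real^'n^'m) *v (g x :: real^'n)) has_vector_derivative
      (f x *v g' + f' *v g x)) (at x within s)"
  by (rule bounded_bilinear.has_vector_derivative[OF bounded_bilinear_matrix_vector_mult])

lemma has_vector_derivative_inner [derivative_intros]:
  "(f has_vector_derivative f') (at x within s) \<Longrightarrow> (g has_vector_derivative g') (at x within s) \<Longrightarrow>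
   ((\<lambda>x. (f x :: 'a :: real_inner) \<bullet> g x) has_vector_derivative (f x \<bullet> g' + f' \<bullet> g x)) (at x within s)"
  by (rule bounded_bilinear.has_vector_derivative[OF bounded_bilinear_inner])

lemma has_vector_derivative_vee [derivative_intros]:
  "(f has_vector_derivative f') F \<Longrightarrow> ((\<lambda>x. vee (f x)) has_vector_derivative vee f') F"
  by (rule bounded_linear.has_vector_derivative[OF bounded_linear_vee])

lemma has_vector_derivative_transpose [derivative_intros]:
  "(f has_vector_derivative f') F \<Longrightarrow>
     ((\<lambda>x. transpose (f x :: real^'n^'m)) has_vector_derivative transpose f') F"
  by (rule bounded_linear.has_vector_derivative[OF bounded_linear_transpose])

lemma matrix_inv_orthogonal: "orthogonal_matrix Q \<Longrightarrow> matrix_inv Q = transpose Q"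
  unfolding matrix_inv_def orthogonal_matrix_def
  by (rule some_equality) (simp, metis matrix_mul_assoc matrix_mul_rid)

lemma inner_transpose_mult_vector:
  "(a :: real^'n) \<bullet> (transpose (A :: real^'n^'m) *v b) = (A *v a) \<bullet> b"
  by (metis dot_lmul_matrix inner_commute transpose_matrix_vector)

lemma skew_transpose_mult_derivative:
  assumes orth: "\<And>\<tau>. transpose (Q \<tau>) ** Q \<tau> = (mat 1 :: real^'n^'n)"
    and Q': "(Q has_vector_derivative Q') (at t)"
  shows "transpose (transpose (Q t) ** Q') = - (transpose (Q t) ** Q')"
proof -
  have "((\<lambda>\<tau>. transpose (Q \<tau>) ** Q \<tau>) has_vector_derivative
      transpose (Q t) ** Q' + transpose Q' ** Q t) (at t)"
    by (intro derivative_intros Q')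
  moreover have "((\<lambda>\<tau>. transpose (Q \<tau>) ** Q \<tau>) has_vector_derivative 0) (at t)"
    unfolding orth by simp
  ultimately have "transpose (Q t) ** Q' + transpose Q' ** Q t = 0"
    by (rule vector_derivative_unique_at)
  then have "transpose Q' ** Q t = - (transpose (Q t) ** Q')"
    by (simp add: eq_neg_iff_add_eq_0 add.commute)
  then show ?thesis
    by (simp only: matrix_transpose_mul transpose_transpose)
qed

section \<open>The Rodrigues formula as a power series\<close>

definition summable_everywhere :: "(nat \<Rightarrow> real) \<Rightarrow> bool" where
  "summable_everywhere c \<longleftrightarrow> (\<forall>x. summable (\<lambda>n. c n * x ^ n))"

definition powser :: "(nat \<Rightarrow> real) \<Rightarrow> real \<Rightarrow> real" where
  "powser c x = (\<Sum>n. c n * x ^ n)"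

lemma summable_everywhere_diffs: "summable_everywhere c \<Longrightarrow> summable_everywhere (diffs c)"
  unfolding summable_everywhere_def by (blast intro: termdiff_converges_all)

lemma summable_everywhere_fact_bound:
  assumes "\<And>n. \<bar>c n\<bar> \<le> 1 / fact n"
  shows "summable_everywhere c"
  unfolding summable_everywhere_def
proof
  fix x :: real
  have "summable (\<lambda>n. \<bar>x\<bar> ^ n / fact n)"
    using summable_exp[of "\<bar>x\<bar>"] by (simp add: divide_inverse mult.commute)
  then show "summable (\<lambda>n. c n * x ^ n)"
  proof (rule summable_comparison_test'[where N=0])
    fix n :: nat
    have "norm (c n * x ^ n) = \<bar>c n\<bar> * \<bar>x\<bar> ^ n" by (simp add: abs_mult power_abs)
    also have "\<dots> \<le> 1 / fact n * \<bar>x\<bar> ^ n" by (rule mult_right_mono[OF assms]) simp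
    finally show "norm (c n * x ^ n) \<le> \<bar>x\<bar> ^ n / fact n" by simp
  qed
qed

lemma powser_has_real_derivative:
  "summable_everywhere c \<Longrightarrow> (powser c has_real_derivative powser (diffs c) x) (at x)"
  unfolding summable_everywhere_def powser_def
  by (rule termdiffs_strong_converges_everywhere) blast

lemma powser_has_derivative [derivative_intros]:
  assumes "summable_everywhere c" "(g has_derivative g') (at x within s)"
  shows "((\<lambda>x. powser c (g x)) has_derivative (\<lambda>h. g' h * powser (diffs c) (g x))) (at x within s)"
  using DERIV_compose_FDERIV[OF powser_has_real_derivative[OF assms(1)] assms(2)] .

lemma continuous_on_powser [continuous_intros]:
  assumes "summable_everywhere c" "continuous_on A f"
  shows "continuous_on A (\<lambda>x. powser c (f x))"
proof -
  have "continuous_on UNIV (powser c)"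
    using assms(1) powser_has_real_derivative DERIV_isCont
    by (blast intro: continuous_at_imp_continuous_on)
  from continuous_on_compose2[OF this assms(2)] show ?thesis by auto
qed

lemma powser_at_0 [simp]: "powser c 0 = c 0"
  by (simp add: powser_def powser_zero)

definition sinc_coeffs :: "nat \<Rightarrow> real" where "sinc_coeffs n = (-1)^n / fact (2*n+1)"
definition cosc_coeffs :: "nat \<Rightarrow> real" where "cosc_coeffs n = (-1)^n / fact (2*n+2)"

abbreviation "Sinc \<equiv> powser sinc_coeffs"
abbreviation "Sinc' \<equiv> powser (diffs sinc_coeffs)"
abbreviation "Sinc'' \<equiv> powser (diffs (diffs sinc_coeffs))"
abbreviation "Cosc \<equiv> powser cosc_coeffs"
abbreviation "Cosc' \<equiv> powser (diffs cosc_coeffs)"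
abbreviation "Cosc'' \<equiv> powser (diffs (diffs cosc_coeffs))"

lemma summable_everywhere_sinc_cosc [simp]:
  "summable_everywhere sinc_coeffs" "summable_everywhere cosc_coeffs"
  "summable_everywhere (diffs sinc_coeffs)" "summable_everywhere (diffs cosc_coeffs)"
  "summable_everywhere (diffs (diffs sinc_coeffs))" "summable_everywhere (diffs (diffs cosc_coeffs))"
proof -
  have sinc: "summable_everywhere sinc_coeffs"
  proof (rule summable_everywhere_fact_bound)
    fix n
    have "fact n \<le> (fact (2*n+1) :: real)" by (rule fact_mono) simp
    then show "\<bar>sinc_coeffs n\<bar> \<le> 1 / fact n" by (simp add: sinc_coeffs_def abs_div frac_le)
  qed
  have cosc: "summable_everywhere cosc_coeffs"
  proof (rule summable_everywhere_fact_bound)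
    fix n
    have "fact n \<le> (fact (2*n+2) :: real)" by (rule fact_mono) simp
    then show "\<bar>cosc_coeffs n\<bar> \<le> 1 / fact n" by (simp add: cosc_coeffs_def abs_div frac_le)
  qed
  show "summable_everywhere sinc_coeffs" "summable_everywhere cosc_coeffs"
    "summable_everywhere (diffs sinc_coeffs)" "summable_everywhere (diffs cosc_coeffs)"
    "summable_everywhere (diffs (diffs sinc_coeffs))" "summable_everywhere (diffs (diffs cosc_coeffs))"
    using sinc cosc by (simp_all add: summable_everywhere_diffs)
qed

lemma Sinc_sin: "Sinc (r^2) * r = sin r"
proof -
  have "(\<lambda>n. sinc_coeffs n * (r^2) ^ n * r) sums (Sinc (r^2) * r)"
    using summable_everywhere_sinc_cosc(1)
    unfolding powser_def summable_everywhere_def by (intro sums_mult2 summable_sums) blast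
  moreover have "(\<lambda>n. sinc_coeffs n * (r^2) ^ n * r) = (\<lambda>n. (- 1) ^ n / fact (2 * n + 1) * r ^ (2 * n + 1))"
    by (simp add: fun_eq_iff sinc_coeffs_def power_mult)
  ultimately show ?thesis using sin_paired[of r] sums_unique2 by metis
qed

lemma Cosc_cos: "Cosc (r^2) * r^2 = 1 - cos r"
proof -
  let ?f = "\<lambda>n. (- 1) ^ n / fact (2 * n) * r ^ (2 * n)"
  have "(\<lambda>n. cosc_coeffs n * (r^2) ^ n * r^2) sums (Cosc (r^2) * r^2)"
    using summable_everywhere_sinc_cosc(2)
    unfolding powser_def summable_everywhere_def by (intro sums_mult2 summable_sums) blast
  moreover have "(\<lambda>n. ?f (Suc n)) sums (cos r - 1)"
    using cos_paired[of r] sums_Suc_iff[of ?f] by simp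
  then have "(\<lambda>n. - ?f (Suc n)) sums (1 - cos r)"
    using sums_minus by fastforce
  moreover have "(\<lambda>n. - ?f (Suc n)) = (\<lambda>n. cosc_coeffs n * (r^2) ^ n * r^2)"
  proof
    fix n
    have "(r^2)^n * r^2 = r^(2 * n + 2)" by (simp add: power_add power_mult power2_eq_square)
    then show "- ?f (Suc n) = cosc_coeffs n * (r^2) ^ n * r^2"
      by (simp add: cosc_coeffs_def mult.assoc)
  qed
  ultimately show ?thesis using sums_unique2 by metis
qed

definition so3_exp_powser :: "vec3 \<Rightarrow> mat3" where
  "so3_exp_powser v = mat 1 + Sinc (v \<bullet> v) *\<^sub>R hat v + Cosc (v \<bullet> v) *\<^sub>R (hat v ** hat v)"

lemma Sinc_Cosc_norm:
  assumes "v \<noteq> 0"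
  shows "Sinc (v \<bullet> v) = sin (norm v) / norm v" "Cosc (v \<bullet> v) = (1 - cos (norm v)) / (norm v)^2"
proof -
  have "norm v \<noteq> 0" and vv: "v \<bullet> v = (norm v)^2"
    using assms by (simp_all add: power2_norm_eq_inner)
  then show "Sinc (v \<bullet> v) = sin (norm v) / norm v" "Cosc (v \<bullet> v) = (1 - cos (norm v)) / (norm v)^2"
    using Sinc_sin[of "norm v"] Cosc_cos[of "norm v"] by (simp_all add: field_simps)
qed

lemma so3_exp_eq_powser: "so3_exp v = so3_exp_powser v"
  by (cases "v = 0") (simp_all add: so3_exp_def so3_exp_powser_def Sinc_Cosc_norm)

lemma Sinc_Cosc_identity: "2 * Cosc (v \<bullet> v) - (Sinc (v \<bullet> v))^2 - (Cosc (v \<bullet> v))^2 * (v \<bullet> v) = 0"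
proof (cases "v = 0")
  case True
  then show ?thesis by (simp add: cosc_coeffs_def sinc_coeffs_def)
next
  case False
  let ?r = "norm v"
  have "?r \<noteq> 0" and vv: "v \<bullet> v = ?r^2" using False by (simp_all add: power2_norm_eq_inner)
  then have "2 * ((1 - cos ?r) / ?r^2) - (sin ?r / ?r)^2 - ((1 - cos ?r) / ?r^2)^2 * ?r^2 = 0"
    by (simp add: field_simps sin_squared_eq) (simp add: power2_eq_square algebra_simps)
  then show ?thesis unfolding Sinc_Cosc_norm[OF False] unfolding vv .
qed

lemma orthogonal_matrix_hat_quadratic:
  fixes v :: vec3
  assumes "2*b - a^2 - b^2*(v$1 * v$1 + v$2 * v$2 + v$3 * v$3) = 0"
  shows "orthogonal_matrix (mat 1 + a *\<^sub>R hat v + b *\<^sub>R (hat v ** hat v))"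
  unfolding orthogonal_matrix_def
  apply (simp add: vec_eq_iff forall_3 matrix_matrix_mult_def sum_3 transpose_def mat_def hat_nth)
  using assms apply (intro conjI; algebra)
  done

lemma orthogonal_matrix_so3_exp_powser: "orthogonal_matrix (so3_exp_powser v)"
  unfolding so3_exp_powser_def
  by (rule orthogonal_matrix_hat_quadratic)
    (use Sinc_Cosc_identity[of v] in \<open>simp add: inner_vec_def sum_3 power2_eq_square\<close>)

definition so3_exp_deriv :: "vec3 \<Rightarrow> vec3 \<Rightarrow> mat3" where
  "so3_exp_deriv v k = (2 * Sinc' (v \<bullet> v) * (v \<bullet> k)) *\<^sub>R hat v + Sinc (v \<bullet> v) *\<^sub>R hat k
     + (2 * Cosc' (v \<bullet> v) * (v \<bullet> k)) *\<^sub>R (hat v ** hat v)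
     + Cosc (v \<bullet> v) *\<^sub>R (hat k ** hat v + hat v ** hat k)"

lemma so3_exp_powser_has_derivative: "(so3_exp_powser has_derivative so3_exp_deriv v) (at v)"
  unfolding so3_exp_powser_def[abs_def]
  apply (rule derivative_eq_intros refl | simp)+
  apply (rule ext)
  apply (simp add: so3_exp_deriv_def algebra_simps inner_commute matrix_scalar_ac
      scalar_matrix_assoc matrix_add_ldistrib)
  done

lemma so3_exp_powser_curve:
  assumes "(u has_vector_derivative u') (at t)"
  shows "((\<lambda>\<tau>. so3_exp_powser (u \<tau>)) has_vector_derivative so3_exp_deriv (u t) u') (at t)"
proof -
  have lin: "so3_exp_deriv v (c *\<^sub>R k) = c *\<^sub>R so3_exp_deriv v k" for v c k
    by (simp add: so3_exp_deriv_def algebra_simps matrix_scalar_ac scalar_matrix_assoc)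
  have "((so3_exp_powser \<circ> u) has_derivative (so3_exp_deriv (u t) \<circ> (\<lambda>h. h *\<^sub>R u'))) (at t)"
    using assms unfolding has_vector_derivative_def
    by (rule diff_chain_at[OF _ so3_exp_powser_has_derivative])
  then show ?thesis unfolding has_vector_derivative_def by (simp add: o_def lin)
qed

text \<open>\<open>exp_drift \<epsilon> a b\<close> is the \<open>\<tau>\<close>-derivative of \<open>so3_exp_powser (\<epsilon> a(\<tau>))\<close> along a curve with
  \<open>a' = b\<close>; \<open>exp_ray_deriv\<close> and \<open>exp_drift_deriv\<close> are the \<open>\<epsilon>\<close>-derivatives of \<open>so3_exp_powser (\<epsilon> a)\<close>
  and of \<open>exp_drift\<close>.\<close>

definition exp_ray_deriv :: "real \<Rightarrow> vec3 \<Rightarrow> mat3" where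
  "exp_ray_deriv e a = (Sinc (e^2 * (a \<bullet> a)) + 2 * e^2 * (a \<bullet> a) * Sinc' (e^2 * (a \<bullet> a))) *\<^sub>R hat a
     + (2 * e * Cosc (e^2 * (a \<bullet> a)) + 2 * e^3 * (a \<bullet> a) * Cosc' (e^2 * (a \<bullet> a))) *\<^sub>R (hat a ** hat a)"

definition exp_drift :: "real \<Rightarrow> vec3 \<Rightarrow> vec3 \<Rightarrow> mat3" where
  "exp_drift e a b = (2 * e^3 * Sinc' (e^2 * (a \<bullet> a)) * (a \<bullet> b)) *\<^sub>R hat a
     + (e * Sinc (e^2 * (a \<bullet> a))) *\<^sub>R hat b
     + (2 * e^4 * Cosc' (e^2 * (a \<bullet> a)) * (a \<bullet> b)) *\<^sub>R (hat a ** hat a)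
     + (e^2 * Cosc (e^2 * (a \<bullet> a))) *\<^sub>R (hat b ** hat a + hat a ** hat b)"

definition exp_drift_deriv :: "real \<Rightarrow> vec3 \<Rightarrow> vec3 \<Rightarrow> mat3" where
  "exp_drift_deriv e a b =
     (2 * (a \<bullet> b) * (2 * e^4 * (a \<bullet> a) * Sinc'' (e^2 * (a \<bullet> a))
        + 3 * e^2 * Sinc' (e^2 * (a \<bullet> a)))) *\<^sub>R hat a
     + (Sinc (e^2 * (a \<bullet> a)) + 2 * e^2 * (a \<bullet> a) * Sinc' (e^2 * (a \<bullet> a))) *\<^sub>R hat b
     + (2 * (a \<bullet> b) * (2 * e^5 * (a \<bullet> a) * Cosc'' (e^2 * (a \<bullet> a))
        + 4 * e^3 * Cosc' (e^2 * (a \<bullet> a)))) *\<^sub>R (hat a ** hat a)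
     + (2 * e * Cosc (e^2 * (a \<bullet> a)) + 2 * e^3 * (a \<bullet> a) * Cosc' (e^2 * (a \<bullet> a)))
        *\<^sub>R (hat b ** hat a + hat a ** hat b)"

lemma so3_exp_deriv_scaleR: "so3_exp_deriv (e *\<^sub>R a) (e *\<^sub>R b) = exp_drift e a b"
  by (simp add: so3_exp_deriv_def exp_drift_def power2_eq_square matrix_scalar_ac
      scalar_matrix_assoc algebra_simps power3_eq_cube power4_eq_xxxx)

lemma has_vector_derivative_so3_exp_ray:
  "((\<lambda>e. so3_exp_powser (e *\<^sub>R a)) has_vector_derivative exp_ray_deriv e a) (at e within S)"
proof -
  have ray: "so3_exp_powser (e *\<^sub>R a) = mat 1 + (e * Sinc (e^2 * (a \<bullet> a))) *\<^sub>R hat a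
     + (e^2 * Cosc (e^2 * (a \<bullet> a))) *\<^sub>R (hat a ** hat a)" for e
    by (simp add: so3_exp_powser_def power2_eq_square matrix_scalar_ac scalar_matrix_assoc
        algebra_simps)
  have "((\<lambda>e. so3_exp_powser (e *\<^sub>R a)) has_vector_derivative exp_ray_deriv e a) (at e)"
    unfolding ray has_vector_derivative_def
    apply (rule derivative_eq_intros refl | simp)+
    apply (rule ext)
    apply (simp add: exp_ray_deriv_def algebra_simps power2_eq_square power3_eq_cube)
    done
  then show ?thesis using has_vector_derivative_at_within by blast
qed

lemma has_vector_derivative_exp_drift:
  "((\<lambda>e. exp_drift e a b) has_vector_derivative exp_drift_deriv e a b) (at e within S)"
proof -
  have power5: "(x::real)^5 = x * (x * (x * (x * x)))" for x
    by (simp add: eval_nat_numeral)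
  have "((\<lambda>e. exp_drift e a b) has_vector_derivative exp_drift_deriv e a b) (at e)"
    unfolding exp_drift_def[abs_def] has_vector_derivative_def
    apply (rule derivative_eq_intros refl | simp)+
    apply (rule ext)
    apply (simp add: exp_drift_deriv_def algebra_simps power2_eq_square power3_eq_cube
        power4_eq_xxxx power5)
    done
  then show ?thesis using has_vector_derivative_at_within by blast
qed

lemma so3_exp_at_zero [simp]:
  "so3_exp_powser 0 = mat 1" "exp_ray_deriv 0 a = hat a"
  "exp_drift 0 a b = 0" "exp_drift_deriv 0 a b = hat b"
  by (simp_all add: so3_exp_powser_def exp_ray_deriv_def exp_drift_def exp_drift_deriv_def
      sinc_coeffs_def)

lemma continuous_on_so3_exp_powser [continuous_intros]:
  "continuous_on A f \<Longrightarrow> continuous_on A (\<lambda>x. so3_exp_powser (f x))"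
  unfolding so3_exp_powser_def by (intro continuous_intros) simp_all

lemma continuous_on_exp_ray_deriv [continuous_intros]:
  "continuous_on A e \<Longrightarrow> continuous_on A f \<Longrightarrow> continuous_on A (\<lambda>x. exp_ray_deriv (e x) (f x))"
  unfolding exp_ray_deriv_def by (intro continuous_intros) simp_all

lemma continuous_on_exp_drift [continuous_intros]:
  "continuous_on A e \<Longrightarrow> continuous_on A f \<Longrightarrow> continuous_on A g \<Longrightarrow>
     continuous_on A (\<lambda>x. exp_drift (e x) (f x) (g x))"
  unfolding exp_drift_def by (intro continuous_intros) simp_all

lemma continuous_on_exp_drift_deriv [continuous_intros]:
  "continuous_on A e \<Longrightarrow> continuous_on A f \<Longrightarrow> continuous_on A g \<Longrightarrow>
     continuous_on A (\<lambda>x. exp_drift_deriv (e x) (f x) (g x))"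
  unfolding exp_drift_deriv_def by (intro continuous_intros) simp_all

lemma continuous_on_field:
  "cont_field F \<Longrightarrow> continuous_on A (\<lambda>p. F (fst p) (snd p))"
  unfolding cont_field_def split_beta' using continuous_on_subset by blast

lemma continuous_on_field_snd:
  assumes "cont_field F"
  shows "continuous_on A (\<lambda>q. F (fst (snd q)) (snd (snd q)))"
  using continuous_on_compose2[OF continuous_on_field[OF assms, of UNIV]
      continuous_on_snd[OF continuous_on_id]] by simp

lemma continuous_on_field_s:
  assumes "cont_field F"
  shows "continuous_on A (\<lambda>s. F s t)"
proof -
  have "continuous_on A (\<lambda>s. (s, t))" by (intro continuous_intros)
  from continuous_on_compose2[OF continuous_on_field[OF assms, of UNIV] this] show ?thesis by simp
qed

lemma continuous_on_field_t:
  assumes "cont_field F"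
  shows "continuous_on A (\<lambda>t. F s t)"
proof -
  have "continuous_on A (\<lambda>t. (s, t))" by (intro continuous_intros)
  from continuous_on_compose2[OF continuous_on_field[OF assms, of UNIV] this] show ?thesis by simp
qed

lemma C1_field_cont:
  assumes "C1_field F"
  shows "cont_field F" "cont_field (pt F)" "cont_field (ps F)"
  using assms by (simp_all add: C1_field_def)

lemma C1_field_has_pt: "C1_field F \<Longrightarrow> ((\<lambda>\<tau>. F s \<tau>) has_vector_derivative pt F s t) (at t)"
  unfolding C1_field_def pt_def using vector_derivative_works by blast

lemma C1_field_has_ps: "C1_field F \<Longrightarrow> ((\<lambda>\<sigma>. F \<sigma> t) has_vector_derivative ps F s t) (at s)"
  unfolding C1_field_def ps_def using vector_derivative_works by blast

lemma pt_add_scaleR: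
  "C1_field x \<Longrightarrow> C1_field \<eta> \<Longrightarrow>
     pt (\<lambda>s t. x s t + e *\<^sub>R \<eta> s t) s t = pt x s t + e *\<^sub>R pt (\<eta> :: vec3 field) s t"
  unfolding pt_def[of "\<lambda>s t. x s t + e *\<^sub>R \<eta> s t"]
  by (intro vector_derivative_at has_vector_derivative_add C1_field_has_pt
      bounded_linear.has_vector_derivative[OF bounded_linear_scaleR_right])

lemma ps_add_scaleR:
  "C1_field x \<Longrightarrow> C1_field \<eta> \<Longrightarrow>
     ps (\<lambda>s t. x s t + e *\<^sub>R \<eta> s t) s t = ps x s t + e *\<^sub>R ps (\<eta> :: vec3 field) s t"
  unfolding ps_def[of "\<lambda>s t. x s t + e *\<^sub>R \<eta> s t"]
  by (intro vector_derivative_at has_vector_derivative_add C1_field_has_ps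
      bounded_linear.has_vector_derivative[OF bounded_linear_scaleR_right])

lemma C1_field_matrix_vector_mult:
  assumes A: "C1_field A" and u: "C1_field (u :: vec3 field)"
  shows "C1_field (\<lambda>s t. (A s t :: mat3) *v u s t)"
    and "pt (\<lambda>s t. A s t *v u s t) = (\<lambda>s t. A s t *v pt u s t + pt A s t *v u s t)"
    and "ps (\<lambda>s t. A s t *v u s t) = (\<lambda>s t. A s t *v ps u s t + ps A s t *v u s t)"
proof -
  have ht: "((\<lambda>\<tau>. A s \<tau> *v u s \<tau>) has_vector_derivative A s t *v pt u s t + pt A s t *v u s t) (at t)"
    for s t by (intro derivative_intros C1_field_has_pt A u)
  have hs: "((\<lambda>\<sigma>. A \<sigma> t *v u \<sigma> t) has_vector_derivative A s t *v ps u s t + ps A s t *v u s t) (at s)"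
    for s t by (intro derivative_intros C1_field_has_ps A u)
  show pt_eq: "pt (\<lambda>s t. A s t *v u s t) = (\<lambda>s t. A s t *v pt u s t + pt A s t *v u s t)"
    unfolding pt_def[of "\<lambda>s t. A s t *v u s t"] using ht by (intro ext vector_derivative_at)
  show ps_eq: "ps (\<lambda>s t. A s t *v u s t) = (\<lambda>s t. A s t *v ps u s t + ps A s t *v u s t)"
    unfolding ps_def[of "\<lambda>s t. A s t *v u s t"] using hs by (intro ext vector_derivative_at)
  note fields = C1_field_cont[OF A, THEN continuous_on_field] C1_field_cont[OF u, THEN continuous_on_field]
  show "C1_field (\<lambda>s t. A s t *v u s t)"
    unfolding C1_field_def cont_field_def pt_eq ps_eq split_beta'
    using ht hs by (intro conjI allI continuous_intros fields; blast intro: differentiableI_vector)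
qed

lemma test_field_C1: "test_field L T0 T1 \<eta> \<Longrightarrow> C1_field \<eta>"
  by (simp add: test_field_def)

lemma mem_box_pair:
  fixes a b c d x y :: real
  shows "(x, y) \<in> box (a, b) (c, d) \<longleftrightarrow> a < x \<and> x < c \<and> b < y \<and> y < d"
  by (auto simp: mem_box Basis_prod_def)

lemma test_field_boundary:
  assumes "test_field L T0 T1 \<eta>"
  shows "\<eta> 0 t = 0" "\<eta> L t = 0" "\<eta> s T0 = 0" "\<eta> s T1 = 0"
proof -
  have "\<eta> s t = 0" if "(s, t) \<notin> box (0, T0) (L, T1)" for s t
    using assms that unfolding test_field_def by blast
  then show "\<eta> 0 t = 0" "\<eta> L t = 0" "\<eta> s T0 = 0" "\<eta> s T1 = 0"
    by (simp_all add: mem_box_pair)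
qed

section \<open>Double integrals over the rectangle\<close>

lemma dint_eq_integral_cbox:
  assumes "continuous_on (cbox (0,T0) (L,T1)) (\<lambda>(s,t). f s t)"
  shows "dint L T0 T1 f = integral (cbox (0,T0) (L,T1)) (\<lambda>(s,t). f s t)"
proof -
  have "integral (cbox (0,T0) (L,T1)) (\<lambda>(s,t). f s t)
      = integral (cbox 0 L) (\<lambda>s. integral (cbox T0 T1) (\<lambda>t. f s t))"
    using integral_prod_continuous[OF assms] by simp
  also have "\<dots> = integral (cbox T0 T1) (\<lambda>t. integral (cbox 0 L) (\<lambda>s. f s t))"
    using integral_swap_continuous[of 0 T0 L T1 f] assms by simp
  finally show ?thesis by (simp add: dint_def cbox_interval)
qed

lemma dint_swap:
  assumes "continuous_on (cbox (0,T0) (L,T1)) (\<lambda>(s,t). f s t)"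
  shows "dint L T0 T1 f = integral {0..L} (\<lambda>s. integral {T0..T1} (\<lambda>t. f s t))"
  using integral_swap_continuous[of 0 T0 L T1 f] assms by (simp add: dint_def cbox_interval)

lemma dint_cong:
  assumes "\<And>s t. s \<in> {0..L} \<Longrightarrow> t \<in> {T0..T1} \<Longrightarrow> f s t = g s t"
  shows "dint L T0 T1 f = dint L T0 T1 g"
  unfolding dint_def using assms by (intro integral_cong) auto

lemma dint_add:
  assumes f: "continuous_on (cbox (0,T0) (L,T1)) (\<lambda>(s,t). f s t)"
    and g: "continuous_on (cbox (0,T0) (L,T1)) (\<lambda>(s,t). g s t)"
  shows "dint L T0 T1 (\<lambda>s t. f s t + g s t) = dint L T0 T1 f + dint L T0 T1 g"
proof -
  have fg: "continuous_on (cbox (0,T0) (L,T1)) (\<lambda>(s,t). f s t + g s t)"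
    using f g unfolding split_beta' by (intro continuous_intros)
  show ?thesis
    unfolding dint_eq_integral_cbox[OF fg] dint_eq_integral_cbox[OF f] dint_eq_integral_cbox[OF g]
    using integral_add[OF integrable_continuous[OF f] integrable_continuous[OF g]]
    by (simp add: split_beta')
qed

lemma dint_scale: "dint L T0 T1 (\<lambda>s t. c * f s t) = c * dint L T0 T1 f"
  by (simp add: dint_def)

lemma dint_minus: "dint L T0 T1 (\<lambda>s t. - f s t) = - dint L T0 T1 f"
  by (simp add: dint_def integral_neg)

lemma dint_diff:
  assumes f: "continuous_on (cbox (0,T0) (L,T1)) (\<lambda>(s,t). f s t)"
    and g: "continuous_on (cbox (0,T0) (L,T1)) (\<lambda>(s,t). g s t)"
  shows "dint L T0 T1 (\<lambda>s t. f s t - g s t) = dint L T0 T1 f - dint L T0 T1 g"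
proof -
  have "continuous_on (cbox (0,T0) (L,T1)) (\<lambda>(s,t). - g s t)"
    using g unfolding split_beta' by (intro continuous_intros)
  from dint_add[OF f this] show ?thesis
    using dint_minus[of L T0 T1 g] by simp
qed

lemma integral_by_parts_vanishing:
  fixes u v :: "real \<Rightarrow> vec3"
  assumes ab: "a \<le> b" and du: "\<And>x. (u has_vector_derivative u' x) (at x)"
    and dv: "\<And>x. (v has_vector_derivative v' x) (at x)"
    and cu: "continuous_on {a..b} u'" and cv: "continuous_on {a..b} v'"
    and va: "v a = 0" and vb: "v b = 0"
  shows "integral {a..b} (\<lambda>x. u x \<bullet> v' x) = - integral {a..b} (\<lambda>x. u' x \<bullet> v x)"
proof -
  have cu0: "continuous_on {a..b} u"
    using du by (intro continuous_at_imp_continuous_on ballI has_vector_derivative_continuous) auto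
  have cv0: "continuous_on {a..b} v"
    using dv by (intro continuous_at_imp_continuous_on ballI has_vector_derivative_continuous) auto
  let ?I = "integral {a..b} (\<lambda>x. u x \<bullet> v' x)"
  have "(\<lambda>x. u x \<bullet> v' x) integrable_on {a..b}"
    by (rule integrable_continuous_real) (intro continuous_intros cu0 cv)
  then have "((\<lambda>x. u x \<bullet> v' x) has_integral u b \<bullet> v b - u a \<bullet> v a - (- ?I)) {a..b}"
    using va vb by (simp add: integrable_integral)
  from integration_by_parts[OF bounded_bilinear_inner ab cu0 cv0 du dv this]
  have "((\<lambda>x. u' x \<bullet> v x) has_integral - ?I) {a..b}" by simp
  then show ?thesis by (simp add: integral_unique)
qed

lemma dint_by_parts_ps:
  fixes a \<eta> :: "vec3 field"
  assumes a: "C1_field a" and \<eta>: "test_field L T0 T1 \<eta>" and "0 \<le> L"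
  shows "dint L T0 T1 (\<lambda>s t. a s t \<bullet> ps \<eta> s t) = - dint L T0 T1 (\<lambda>s t. ps a s t \<bullet> \<eta> s t)"
proof -
  note \<eta>' = test_field_C1[OF \<eta>]
  have "integral {0..L} (\<lambda>s. a s t \<bullet> ps \<eta> s t) = - integral {0..L} (\<lambda>s. ps a s t \<bullet> \<eta> s t)" for t
    by (rule integral_by_parts_vanishing[OF assms(3) C1_field_has_ps[OF a] C1_field_has_ps[OF \<eta>']
          C1_field_cont(3)[OF a, THEN continuous_on_field_s]
          C1_field_cont(3)[OF \<eta>', THEN continuous_on_field_s] test_field_boundary(1,2)[OF \<eta>]])
  then show ?thesis unfolding dint_def by (simp add: integral_neg)
qed

lemma dint_by_parts_pt:
  fixes a \<eta> :: "vec3 field"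
  assumes a: "C1_field a" and \<eta>: "test_field L T0 T1 \<eta>" and "T0 \<le> T1"
  shows "dint L T0 T1 (\<lambda>s t. a s t \<bullet> pt \<eta> s t) = - dint L T0 T1 (\<lambda>s t. pt a s t \<bullet> \<eta> s t)"
proof -
  note \<eta>' = test_field_C1[OF \<eta>]
  note fields = C1_field_cont[OF a, THEN continuous_on_field] C1_field_cont[OF \<eta>', THEN continuous_on_field]
  have "integral {T0..T1} (\<lambda>t. a s t \<bullet> pt \<eta> s t) = - integral {T0..T1} (\<lambda>t. pt a s t \<bullet> \<eta> s t)" for s
    by (rule integral_by_parts_vanishing[OF assms(3) C1_field_has_pt[OF a] C1_field_has_pt[OF \<eta>']
          C1_field_cont(2)[OF a, THEN continuous_on_field_t]
          C1_field_cont(2)[OF \<eta>', THEN continuous_on_field_t] test_field_boundary(3,4)[OF \<eta>]])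
  moreover have "continuous_on (cbox (0,T0) (L,T1)) (\<lambda>(s,t). a s t \<bullet> pt \<eta> s t)"
    "continuous_on (cbox (0,T0) (L,T1)) (\<lambda>(s,t). pt a s t \<bullet> \<eta> s t)"
    unfolding split_beta' by (intro continuous_intros fields)+
  ultimately show ?thesis by (simp add: dint_swap integral_neg)
qed

lemma dint_by_parts:
  fixes a b \<eta> :: "vec3 field"
  assumes c: "continuous_on (cbox (0,T0) (L,T1)) (\<lambda>(s,t). c s t)"
    and a: "C1_field a" and b: "C1_field b" and \<eta>: "test_field L T0 T1 \<eta>"
    and "0 \<le> L" "T0 \<le> T1"
  shows "dint L T0 T1 (\<lambda>s t. c s t \<bullet> \<eta> s t + a s t \<bullet> pt \<eta> s t + b s t \<bullet> ps \<eta> s t)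
       = dint L T0 T1 (\<lambda>s t. (c s t - pt a s t - ps b s t) \<bullet> \<eta> s t)"
proof -
  note \<eta>' = test_field_C1[OF \<eta>]
  note fields = C1_field_cont[OF a, THEN continuous_on_field] C1_field_cont[OF b, THEN continuous_on_field]
    C1_field_cont[OF \<eta>', THEN continuous_on_field] c[unfolded split_beta']
  let ?P = "cbox (0,T0) (L,T1)"
  have "continuous_on ?P (\<lambda>(s,t). c s t \<bullet> \<eta> s t)" "continuous_on ?P (\<lambda>(s,t). a s t \<bullet> pt \<eta> s t)"
    "continuous_on ?P (\<lambda>(s,t). b s t \<bullet> ps \<eta> s t)"
    "continuous_on ?P (\<lambda>(s,t). c s t \<bullet> \<eta> s t + a s t \<bullet> pt \<eta> s t)"
    "continuous_on ?P (\<lambda>(s,t). pt a s t \<bullet> \<eta> s t)" "continuous_on ?P (\<lambda>(s,t). ps b s t \<bullet> \<eta> s t)"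
    "continuous_on ?P (\<lambda>(s,t). c s t \<bullet> \<eta> s t - pt a s t \<bullet> \<eta> s t)"
    unfolding split_beta' by (intro continuous_intros fields)+
  then show ?thesis
    using dint_by_parts_pt[OF a \<eta>] dint_by_parts_ps[OF b \<eta>] assms(5,6)
    by (simp add: dint_add dint_diff inner_diff_left)
qed

lemma has_real_derivative_affine_dint:
  assumes A: "\<And>e s t. A e s t = B s t + e * H s t"
    and B: "continuous_on (cbox (0,T0) (L,T1)) (\<lambda>(s,t). B s t)"
    and H: "continuous_on (cbox (0,T0) (L,T1)) (\<lambda>(s,t). H s t)"
    and c: "(c has_real_derivative D) (at 0)"
  shows "((\<lambda>e. c e + dint L T0 T1 (A e)) has_real_derivative D + dint L T0 T1 H) (at 0)"
proof -
  have "dint L T0 T1 (A e) = dint L T0 T1 B + e * dint L T0 T1 H" for e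
  proof -
    have "continuous_on (cbox (0,T0) (L,T1)) (\<lambda>(s,t). e * H s t)"
      using H unfolding split_beta' by (intro continuous_intros)
    from dint_add[OF B this] show ?thesis
      by (simp add: A[abs_def] dint_scale)
  qed
  moreover have "((\<lambda>e. c e + (dint L T0 T1 B + e * dint L T0 T1 H)) has_real_derivative
      D + (0 + 1 * dint L T0 T1 H)) (at 0)"
    by (intro DERIV_add c DERIV_const DERIV_cmult_right DERIV_ident)
  ultimately show ?thesis by simp
qed

lemma dint_has_real_derivative:
  fixes F F' :: "real \<Rightarrow> real field"
  assumes deriv: "\<And>e s t. ((\<lambda>e. F e s t) has_real_derivative F' e s t) (at e)"
    and cont: "\<And>e. continuous_on (cbox (0,T0) (L,T1)) (\<lambda>(s,t). F e s t)"
    and cont': "continuous_on ({-1..1} \<times> cbox (0,T0) (L,T1)) (\<lambda>(e,s,t). F' e s t)"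
  shows "((\<lambda>e. dint L T0 T1 (F e)) has_real_derivative dint L T0 T1 (F' 0)) (at 0)"
proof -
  let ?P = "cbox (0,T0) (L,T1)"
  have "continuous_on ?P (\<lambda>p. (\<lambda>(e,s,t). F' e s t) (0, p))"
    by (rule continuous_on_compose2[OF cont']) (auto intro: continuous_intros)
  then have cont0: "continuous_on ?P (\<lambda>(s,t). F' 0 s t)" by (simp add: split_beta')
  have "((\<lambda>e. integral ?P (\<lambda>(s,t). F e s t)) has_field_derivative integral ?P (\<lambda>(s,t). F' 0 s t))
      (at 0 within {-1..1})"
    using cont'
    by (intro leibniz_rule_field_derivative integrable_continuous cont)
      (auto simp: split_beta' intro: has_field_derivative_at_within deriv)
  then show ?thesis
    by (simp add: dint_eq_integral_cbox[OF cont] dint_eq_integral_cbox[OF cont0] at_within_Icc_at)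
qed

section \<open>The fundamental lemma of the calculus of variations\<close>

definition pos_sq :: "real \<Rightarrow> real" where "pos_sq y = (max 0 y)^2"

lemma pos_sq_has_real_derivative: "(pos_sq has_real_derivative 2 * max 0 y) (at y)"
proof (cases y "0 :: real" rule: linorder_cases)
  case less
  have "((\<lambda>y. 0) has_real_derivative 2 * max 0 y) (at y)" using less by simp
  then show ?thesis
    by (rule has_field_derivative_transform_within_open[OF _ open_lessThan[of 0]])
      (use less in \<open>auto simp: pos_sq_def\<close>)
next
  case equal
  have "norm ((pos_sq (0 + h) - pos_sq 0) / h) \<le> \<bar>h\<bar>" for h
  proof -
    have "pos_sq h \<le> \<bar>h\<bar> * \<bar>h\<bar>" "0 \<le> pos_sq h" "pos_sq 0 = 0"
      by (auto simp add: pos_sq_def max_def power2_eq_square)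
    then show ?thesis by (cases "h = 0") (simp_all add: abs_div divide_le_eq)
  qed
  then have "((\<lambda>h. (pos_sq (0 + h) - pos_sq 0) / h) \<longlongrightarrow> 0) (at 0)"
    by (rule Lim_null_comparison[OF always_eventually[OF allI]])
      (intro tendsto_rabs_zero tendsto_ident_at)
  then show ?thesis using equal by (simp add: DERIV_def)
next
  case greater
  have "((\<lambda>y. y^2) has_real_derivative 2 * max 0 y) (at y)"
    using DERIV_pow[of 2 y] greater by (simp add: max_def)
  then show ?thesis
    by (rule has_field_derivative_transform_within_open[OF _ open_greaterThan[of 0]])
      (use greater in \<open>auto simp: pos_sq_def\<close>)
qed

definition bump :: "real \<Rightarrow> real \<Rightarrow> real" where "bump r x = pos_sq (r^2 - x^2)"
definition bump_deriv :: "real \<Rightarrow> real \<Rightarrow> real" where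
  "bump_deriv r x = 2 * max 0 (r^2 - x^2) * (- 2 * x)"

lemma bump_shift_has_real_derivative:
  "((\<lambda>\<tau>. bump r (\<tau> - c)) has_real_derivative bump_deriv r (t - c)) (at t)"
proof -
  have "((\<lambda>\<tau>. r^2 - (\<tau> - c)^2) has_real_derivative - 2 * (t - c)) (at t)"
    by (auto intro!: derivative_eq_intros)
  from DERIV_chain2[OF pos_sq_has_real_derivative this] show ?thesis
    by (simp add: bump_def bump_deriv_def)
qed

lemma continuous_on_bump [continuous_intros]:
  "continuous_on A f \<Longrightarrow> continuous_on A (\<lambda>x. bump r (f x))"
  unfolding bump_def pos_sq_def by (intro continuous_intros)

lemma continuous_on_bump_deriv [continuous_intros]:
  "continuous_on A f \<Longrightarrow> continuous_on A (\<lambda>x. bump_deriv r (f x))"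
  unfolding bump_deriv_def by (intro continuous_intros)

lemma bump_nonneg: "0 \<le> bump r x"
  by (simp add: bump_def pos_sq_def)

lemma bump_pos_0: "0 < r \<Longrightarrow> 0 < bump r 0"
  by (simp add: bump_def pos_sq_def)

lemma bump_zero: "0 \<le> r \<Longrightarrow> r \<le> \<bar>x\<bar> \<Longrightarrow> bump r x = 0"
  using abs_le_square_iff[of r x] by (simp add: bump_def pos_sq_def)

definition bump_field :: "real \<Rightarrow> real \<Rightarrow> real \<Rightarrow> real \<Rightarrow> 3 \<Rightarrow> vec3 field" where
  "bump_field \<sigma> r s0 t0 i = (\<lambda>s t. (\<sigma> * bump r (s - s0) * bump r (t - t0)) *\<^sub>R axis i 1)"

lemma has_vector_derivative_real_scaleR:
  "(f has_real_derivative f') (at t) \<Longrightarrow> ((\<lambda>\<tau>. f \<tau> *\<^sub>R v) has_vector_derivative (f' *\<^sub>R v)) (at t)"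
  unfolding has_vector_derivative_def has_field_derivative_def
  by (auto intro!: derivative_eq_intros simp: fun_eq_iff mult.commute)

lemma bump_field_has_pt:
  "((\<lambda>\<tau>. bump_field \<sigma> r s0 t0 i s \<tau>) has_vector_derivative
     (\<sigma> * bump r (s - s0) * bump_deriv r (t - t0)) *\<^sub>R axis i 1) (at t)"
  unfolding bump_field_def
  by (intro has_vector_derivative_real_scaleR DERIV_cmult bump_shift_has_real_derivative)

lemma bump_field_has_ps:
  "((\<lambda>\<sigma>'. bump_field \<sigma> r s0 t0 i \<sigma>' t) has_vector_derivative
     (\<sigma> * bump_deriv r (s - s0) * bump r (t - t0)) *\<^sub>R axis i 1) (at s)"
  unfolding bump_field_def
  by (intro has_vector_derivative_real_scaleR DERIV_cmult_right DERIV_cmult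
      bump_shift_has_real_derivative)

lemma bump_field_pt:
  "pt (bump_field \<sigma> r s0 t0 i) = (\<lambda>s t. (\<sigma> * bump r (s - s0) * bump_deriv r (t - t0)) *\<^sub>R axis i 1)"
  unfolding pt_def by (intro ext vector_derivative_at bump_field_has_pt)

lemma bump_field_ps:
  "ps (bump_field \<sigma> r s0 t0 i) = (\<lambda>s t. (\<sigma> * bump_deriv r (s - s0) * bump r (t - t0)) *\<^sub>R axis i 1)"
  unfolding ps_def by (intro ext vector_derivative_at bump_field_has_ps)

lemma C1_field_bump_field: "C1_field (bump_field \<sigma> r s0 t0 i)"
  unfolding C1_field_def cont_field_def bump_field_pt bump_field_ps
  using bump_field_has_pt bump_field_has_ps
  by (intro conjI allI; (blast intro: differentiableI_vector)?)
    (simp_all add: bump_field_def split_beta' continuous_intros)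

lemma test_field_bump_field:
  assumes "0 < r" and "cbox (s0 - r, t0 - r) (s0 + r, t0 + r) \<subseteq> box (0, T0) (L, T1)"
  shows "test_field L T0 T1 (bump_field \<sigma> r s0 t0 i)"
  unfolding test_field_def
proof (intro conjI C1_field_bump_field exI[of _ "cbox (s0 - r, t0 - r) (s0 + r, t0 + r)"] allI impI)
  fix s t assume "(s, t) \<notin> cbox (s0 - r, t0 - r) (s0 + r, t0 + r)"
  then have "r \<le> \<bar>s - s0\<bar> \<or> r \<le> \<bar>t - t0\<bar>"
    by (auto simp: cbox_Pair_eq cbox_interval)
  then show "bump_field \<sigma> r s0 t0 i s t = 0"
    using assms(1) by (auto simp: bump_field_def bump_zero)
qed (use assms(2) in simp_all)

lemma positive_on_square:
  fixes h :: "real \<times> real \<Rightarrow> real"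
  assumes "continuous_on (cbox a b) h" and p: "(s0, t0) \<in> box a b" and "0 < h (s0, t0)"
  obtains r where "0 < r" "cbox (s0 - r, t0 - r) (s0 + r, t0 + r) \<subseteq> box a b"
    "\<And>s t. \<bar>s - s0\<bar> \<le> r \<Longrightarrow> \<bar>t - t0\<bar> \<le> r \<Longrightarrow> 0 < h (s, t)"
proof -
  obtain d1 where d1: "0 < d1" "ball (s0, t0) d1 \<subseteq> box a b"
    using open_contains_ball p open_box by blast
  have "isCont h (s0, t0)"
    using assms(1) p by (simp add: continuous_on_interior interior_cbox)
  then obtain d2 where d2: "0 < d2" "\<And>q. dist q (s0, t0) < d2 \<Longrightarrow> dist (h q) (h (s0, t0)) < h (s0, t0)"
    using assms(3) unfolding continuous_at_eps_delta by blast
  define r where "r = min d1 d2 / 4"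
  have r: "0 < r" using d1 d2 by (simp add: r_def)
  have near: "dist (s, t) (s0, t0) < min d1 d2" if "\<bar>s - s0\<bar> \<le> r" "\<bar>t - t0\<bar> \<le> r" for s t
  proof -
    have "dist (s, t) (s0, t0) \<le> \<bar>s - s0\<bar> + \<bar>t - t0\<bar>"
      using sqrt_sum_squares_le_sum_abs[of "s - s0" "t - t0"] by (simp add: dist_Pair_Pair dist_real_def)
    also have "\<dots> < min d1 d2" using that r by (simp add: r_def)
    finally show ?thesis .
  qed
  show ?thesis
  proof
    show "cbox (s0 - r, t0 - r) (s0 + r, t0 + r) \<subseteq> box a b"
    proof
      fix q assume "q \<in> cbox (s0 - r, t0 - r) (s0 + r, t0 + r)"
      then obtain s t where "q = (s, t)" "\<bar>s - s0\<bar> \<le> r" "\<bar>t - t0\<bar> \<le> r"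
        by (cases q) (auto simp: cbox_Pair_eq cbox_interval abs_le_iff)
      with near d1(2) show "q \<in> box a b" by (force simp: dist_commute)
    qed
    show "0 < h (s, t)" if "\<bar>s - s0\<bar> \<le> r" "\<bar>t - t0\<bar> \<le> r" for s t
      using d2(2)[of "(s, t)"] near[OF that] by (auto simp: dist_real_def)
  qed (rule r)
qed

lemma fundamental_lemma_interior:
  fixes K :: "vec3 field"
  assumes cont: "continuous_on (cbox (0,T0) (L,T1)) (\<lambda>(s,t). K s t)"
    and vanish: "\<And>\<eta>. test_field L T0 T1 \<eta> \<Longrightarrow> dint L T0 T1 (\<lambda>s t. K s t \<bullet> \<eta> s t) = 0"
    and p: "(s0, t0) \<in> box (0,T0) (L,T1)"
  shows "K s0 t0 = 0"
proof (rule ccontr)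
  let ?P = "cbox (0,T0) (L,T1)"
  assume "K s0 t0 \<noteq> 0"
  then obtain i where "K s0 t0 $ i \<noteq> 0" by (auto simp: vec_eq_iff)
  define \<sigma> where "\<sigma> = sgn (K s0 t0 $ i)"
  define h where "h = (\<lambda>(s, t). \<sigma> * (K s t $ i))"
  have cont_h: "continuous_on ?P h"
    unfolding h_def split_beta'
    by (intro continuous_intros continuous_on_component) (use cont in \<open>simp add: split_beta'\<close>)
  have "0 < h (s0, t0)"
    using \<open>K s0 t0 $ i \<noteq> 0\<close> by (simp add: h_def \<sigma>_def sgn_real_def)
  then obtain r where r: "0 < r" "cbox (s0 - r, t0 - r) (s0 + r, t0 + r) \<subseteq> box (0,T0) (L,T1)"
    and pos: "\<And>s t. \<bar>s - s0\<bar> \<le> r \<Longrightarrow> \<bar>t - t0\<bar> \<le> r \<Longrightarrow> 0 < h (s, t)"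
    using positive_on_square[OF cont_h p] by blast
  define G where "G = (\<lambda>(s, t). bump r (s - s0) * bump r (t - t0) * h (s, t))"
  have cont_G: "continuous_on ?P G"
    unfolding G_def split_beta' by (intro continuous_intros) (simp add: cont_h)
  have "dint L T0 T1 (\<lambda>s t. K s t \<bullet> bump_field \<sigma> r s0 t0 i s t) = integral ?P G"
    using dint_eq_integral_cbox[of T0 L T1 "\<lambda>s t. G (s, t)"] cont_G
    by (simp add: bump_field_def G_def h_def inner_axis split_beta' algebra_simps)
  then have "(G has_integral 0) ?P"
    using vanish[OF test_field_bump_field[OF r]] integrable_integral[OF integrable_continuous[OF cont_G]]
    by simp
  moreover have "0 \<le> G q" if "q \<in> box (0,T0) (L,T1)" for q
  proof (cases q)
    case (Pair s t)
    then show ?thesis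
      using pos[of s t] bump_zero[of r "s - s0"] bump_zero[of r "t - t0"] r(1)
      by (cases "\<bar>s - s0\<bar> \<le> r \<and> \<bar>t - t0\<bar> \<le> r") (auto simp: G_def bump_nonneg)
  qed
  moreover have "(s0, t0) \<in> ?P" using p box_subset_cbox by blast
  ultimately have "G (s0, t0) = 0"
    using has_integral_0_cbox_imp_0[OF cont_G] p by blast
  moreover have "0 < G (s0, t0)"
    using pos[of s0 t0] bump_pos_0[OF r(1)] r(1) by (simp add: G_def)
  ultimately show False by simp
qed

theorem fundamental_lemma_calculus_of_variations:
  fixes K :: "vec3 field"
  assumes "0 < L" "T0 < T1"
    and cont: "continuous_on (cbox (0,T0) (L,T1)) (\<lambda>(s,t). K s t)"
    and vanish: "\<And>\<eta>. test_field L T0 T1 \<eta> \<Longrightarrow> dint L T0 T1 (\<lambda>s t. K s t \<bullet> \<eta> s t) = 0"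
  shows "\<forall>s\<in>{0..L}. \<forall>t\<in>{T0..T1}. K s t = 0"
proof (intro ballI)
  fix s t assume "s \<in> {0..L}" "t \<in> {T0..T1}"
  have "(L/2, (T0+T1)/2) \<in> box (0,T0) (L,T1)" using assms(1,2) by (simp add: mem_box_pair)
  then have closure: "closure (box (0,T0) (L,T1)) = cbox (0,T0) (L,T1)"
    by (intro closure_box) blast
  have "continuous_on (closure (box (0,T0) (L,T1))) (\<lambda>(s,t). K s t)"
    using cont closure by simp
  moreover have "(\<lambda>(s,t). K s t) q = 0" if "q \<in> box (0,T0) (L,T1)" for q
    using fundamental_lemma_interior[OF cont vanish] that by (cases q) auto
  moreover have "(s, t) \<in> closure (box (0,T0) (L,T1))"
    using \<open>s \<in> {0..L}\<close> \<open>t \<in> {T0..T1}\<close> unfolding closure by (simp add: cbox_Pair_eq cbox_interval)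
  ultimately have "(\<lambda>(s,t). K s t) (s, t) = 0"
    by (rule continuous_constant_on_closure)
  then show "K s t = 0" by simp
qed

lemma first_variation_vanishes_iff:
  fixes K :: "vec3 field" and F :: "vec3 field \<Rightarrow> real \<Rightarrow> real"
  assumes "0 < L" "T0 < T1"
    and cont: "continuous_on (cbox (0,T0) (L,T1)) (\<lambda>(s,t). K s t)"
    and deriv: "\<And>\<eta>. test_field L T0 T1 \<eta> \<Longrightarrow>
      (F \<eta> has_real_derivative dint L T0 T1 (\<lambda>s t. K s t \<bullet> \<eta> s t)) (at 0)"
  shows "(\<forall>\<eta>. test_field L T0 T1 \<eta> \<longrightarrow> (F \<eta> has_real_derivative 0) (at 0))
    \<longleftrightarrow> (\<forall>s\<in>{0..L}. \<forall>t\<in>{T0..T1}. K s t = 0)"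
proof
  assume "\<forall>\<eta>. test_field L T0 T1 \<eta> \<longrightarrow> (F \<eta> has_real_derivative 0) (at 0)"
  then show "\<forall>s\<in>{0..L}. \<forall>t\<in>{T0..T1}. K s t = 0"
    using DERIV_unique[OF deriv] by (intro fundamental_lemma_calculus_of_variations[OF assms(1-3)]) blast
next
  assume "\<forall>s\<in>{0..L}. \<forall>t\<in>{T0..T1}. K s t = 0"
  then have "dint L T0 T1 (\<lambda>s t. K s t \<bullet> \<eta> s t) = dint L T0 T1 (\<lambda>s t. 0)" for \<eta>
    by (intro dint_cong) simp
  then show "\<forall>\<eta>. test_field L T0 T1 \<eta> \<longrightarrow> (F \<eta> has_real_derivative 0) (at 0)"
    using deriv by (simp add: dint_def)
qed

text \<open>The integrand of the constraint part of the action, with \<open>\<Lambda>\<^sup>T\<close> for \<open>\<Lambda>\<^sup>-\<^sup>1\<close>. Arguments: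
  \<open>\<Lambda>, \<Lambda>\<^sup>., \<Lambda>', r, r\<^sup>., r'\<close>, the multipliers \<open>\<pi>, \<Pi>, R, \<mu>, M\<close>, and \<open>\<omega>, \<Omega>, \<rho>, \<gamma>, \<Gamma>\<close>.\<close>
definition constraint_density :: "mat3 \<Rightarrow> mat3 \<Rightarrow> mat3 \<Rightarrow> vec3 \<Rightarrow> vec3 \<Rightarrow> vec3 \<Rightarrow> vec3 \<Rightarrow> vec3
    \<Rightarrow> vec3 \<Rightarrow> vec3 \<Rightarrow> vec3 \<Rightarrow> vec3 \<Rightarrow> vec3 \<Rightarrow> vec3 \<Rightarrow> vec3 \<Rightarrow> vec3 \<Rightarrow> real" where
  "constraint_density A At As x xt xs p P R m M w W r g G =
     p \<bullet> (vee (transpose A ** At) - w) + P \<bullet> (vee (transpose A ** As) - W)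
   + R \<bullet> (transpose A *v x - r) + m \<bullet> (transpose A *v xt - g) + M \<bullet> (transpose A *v xs - G)"

lemma action_eq_constraint_density:
  assumes "\<And>s t. orthogonal_matrix (\<Lambda> s t)"
  shows "action L T0 T1 l \<Lambda> x w g W G \<rho> \<pi> Pm R \<mu> M = lag_int T0 T1 l w g W G \<rho> +
    dint L T0 T1 (\<lambda>s t. constraint_density (\<Lambda> s t) (pt \<Lambda> s t) (ps \<Lambda> s t) (x s t) (pt x s t) (ps x s t)
      (\<pi> s t) (Pm s t) (R s t) (\<mu> s t) (M s t) (w s t) (W s t) (\<rho> s t) (g s t) (G s t))"
  by (simp add: action_def constraint_density_def matrix_inv_orthogonal assms)

lemma continuous_on_constraint_density [continuous_intros]:
  assumes "continuous_on S A" "continuous_on S At" "continuous_on S As" "continuous_on S x"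
    "continuous_on S xt" "continuous_on S xs" "continuous_on S p" "continuous_on S P" "continuous_on S R"
    "continuous_on S m" "continuous_on S M" "continuous_on S w" "continuous_on S W" "continuous_on S r"
    "continuous_on S g" "continuous_on S G"
  shows "continuous_on S (\<lambda>q. constraint_density (A q) (At q) (As q) (x q) (xt q) (xs q)
     (p q) (P q) (R q) (m q) (M q) (w q) (W q) (r q) (g q) (G q))"
  unfolding constraint_density_def by (intro continuous_intros assms)

section \<open>Variations of the rotation\<close>

text \<open>The integrand along the variation \<open>\<Lambda> exp(\<epsilon> hat a)\<close>, where \<open>u\<^sub>1, u\<^sub>2\<close> stand for
  \<open>a\<^sup>., a'\<close>, and its \<open>\<epsilon>\<close>-derivative.\<close>
definition rotated_density :: "real \<Rightarrow> vec3 \<Rightarrow> vec3 \<Rightarrow> vec3 \<Rightarrow> mat3 \<Rightarrow> mat3 \<Rightarrow> mat3 \<Rightarrow> vec3 \<Rightarrow> vec3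
    \<Rightarrow> vec3 \<Rightarrow> vec3 \<Rightarrow> vec3 \<Rightarrow> vec3 \<Rightarrow> vec3 \<Rightarrow> vec3 \<Rightarrow> vec3 \<Rightarrow> vec3 \<Rightarrow> vec3 \<Rightarrow> vec3 \<Rightarrow> vec3 \<Rightarrow> real" where
  "rotated_density e a u1 u2 A At As x xt xs p P R m M w W r g G =
     constraint_density (A ** so3_exp_powser (e *\<^sub>R a))
       (At ** so3_exp_powser (e *\<^sub>R a) + A ** exp_drift e a u1)
       (As ** so3_exp_powser (e *\<^sub>R a) + A ** exp_drift e a u2) x xt xs p P R m M w W r g G"

definition rotated_density_deriv :: "real \<Rightarrow> vec3 \<Rightarrow> vec3 \<Rightarrow> vec3 \<Rightarrow> mat3 \<Rightarrow> mat3 \<Rightarrow> mat3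
    \<Rightarrow> vec3 \<Rightarrow> vec3 \<Rightarrow> vec3 \<Rightarrow> vec3 \<Rightarrow> vec3 \<Rightarrow> vec3 \<Rightarrow> vec3 \<Rightarrow> vec3 \<Rightarrow> real" where
  "rotated_density_deriv e a u1 u2 A At As x xt xs p P R m M =
     p \<bullet> vee ((transpose (exp_ray_deriv e a) ** transpose A) **
                (At ** so3_exp_powser (e *\<^sub>R a) + A ** exp_drift e a u1)
              + (transpose (so3_exp_powser (e *\<^sub>R a)) ** transpose A) **
                (At ** exp_ray_deriv e a + A ** exp_drift_deriv e a u1))
   + P \<bullet> vee ((transpose (exp_ray_deriv e a) ** transpose A) **
                (As ** so3_exp_powser (e *\<^sub>R a) + A ** exp_drift e a u2)
              + (transpose (so3_exp_powser (e *\<^sub>R a)) ** transpose A) **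
                (As ** exp_ray_deriv e a + A ** exp_drift_deriv e a u2))
   + R \<bullet> ((transpose (exp_ray_deriv e a) ** transpose A) *v x)
   + m \<bullet> ((transpose (exp_ray_deriv e a) ** transpose A) *v xt)
   + M \<bullet> ((transpose (exp_ray_deriv e a) ** transpose A) *v xs)"

lemma rotated_density_has_real_derivative:
  "((\<lambda>e. rotated_density e a u1 u2 A At As x xt xs p P R m M w W r g G) has_real_derivative
    rotated_density_deriv e a u1 u2 A At As x xt xs p P R m M) (at e)"
  unfolding rotated_density_def[abs_def] constraint_density_def matrix_transpose_mul
    rotated_density_deriv_def has_real_derivative_iff_has_vector_derivative
  apply (rule derivative_eq_intros has_vector_derivative_so3_exp_ray
      has_vector_derivative_exp_drift refl)+
  apply (simp add: algebra_simps)
  done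

text \<open>With the constraints in force, the derivative at \<open>\<epsilon> = 0\<close> reduces to the commutators
  \<open>[hat \<omega>, hat a] = hat (\<omega> \<times> a)\<close> and the terms \<open>hat a \<Lambda>\<^sup>T r = a \<times> \<rho>\<close>.\<close>
lemma rotated_density_deriv_0:
  assumes "transpose A ** A = mat 1" and w: "transpose A ** At = hat w" and W: "transpose A ** As = hat W"
    and r: "transpose A *v x = r" and g: "transpose A *v xt = g" and G: "transpose A *v xs = G"
  shows "rotated_density_deriv 0 a u1 u2 A At As x xt xs p P R m M
    = (- (cross3 w p + cross3 W P + cross3 g m + cross3 G M + cross3 r R)) \<bullet> a + p \<bullet> u1 + P \<bullet> u2"
proof -
  have "hat a ** transpose A ** At = hat a ** hat w" "hat a ** transpose A ** As = hat a ** hat W"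
    by (simp_all add: matrix_mul_assoc[symmetric] w W)
  moreover have "transpose A ** (A ** hat u1 + At ** hat a) = hat u1 + hat w ** hat a"
    "transpose A ** (A ** hat u2 + As ** hat a) = hat u2 + hat W ** hat a"
    by (simp_all add: matrix_add_ldistrib matrix_mul_assoc w W assms(1))
  moreover have "hat a ** transpose A *v x = cross3 a r" "hat a ** transpose A *v xt = cross3 a g"
    "hat a ** transpose A *v xs = cross3 a G"
    by (simp_all add: matrix_vector_mul_assoc[symmetric] r g G hat_mult_vector
        del: transpose_matrix_vector)
  moreover have "vee (hat w ** hat a) = vee (hat a ** hat w) + cross3 w a"
    "vee (hat W ** hat a) = vee (hat a ** hat W) + cross3 W a"
    using vee_hat_commutator[of w a] vee_hat_commutator[of W a] by (simp_all add: algebra_simps)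
  moreover have "p \<bullet> cross3 w a + P \<bullet> cross3 W a - R \<bullet> cross3 a r - m \<bullet> cross3 a g - M \<bullet> cross3 a G
      = (- (cross3 w p + cross3 W P + cross3 g m + cross3 G M + cross3 r R)) \<bullet> a"
    by (simp add: cross3_def inner_vec_def sum_3 algebra_simps)
  ultimately show ?thesis
    unfolding rotated_density_deriv_def
    by (simp add: inner_add_right inner_diff_right algebra_simps del: transpose_matrix_vector)
qed

lemma continuous_on_rotated_density [continuous_intros]:
  "continuous_on S e \<Longrightarrow> continuous_on S a \<Longrightarrow> continuous_on S u1 \<Longrightarrow> continuous_on S u2 \<Longrightarrow>
   continuous_on S A \<Longrightarrow> continuous_on S At \<Longrightarrow> continuous_on S As \<Longrightarrow> continuous_on S x \<Longrightarrow>
   continuous_on S xt \<Longrightarrow> continuous_on S xs \<Longrightarrow> continuous_on S p \<Longrightarrow> continuous_on S P \<Longrightarrow>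
   continuous_on S R \<Longrightarrow> continuous_on S m \<Longrightarrow> continuous_on S M \<Longrightarrow> continuous_on S w \<Longrightarrow>
   continuous_on S W \<Longrightarrow> continuous_on S r \<Longrightarrow> continuous_on S g \<Longrightarrow> continuous_on S G \<Longrightarrow>
   continuous_on S (\<lambda>q. rotated_density (e q) (a q) (u1 q) (u2 q) (A q) (At q) (As q) (x q) (xt q)
     (xs q) (p q) (P q) (R q) (m q) (M q) (w q) (W q) (r q) (g q) (G q))"
  unfolding rotated_density_def by (intro continuous_intros)

lemma continuous_on_rotated_density_deriv [continuous_intros]:
  "continuous_on S e \<Longrightarrow> continuous_on S a \<Longrightarrow> continuous_on S u1 \<Longrightarrow> continuous_on S u2 \<Longrightarrow>
   continuous_on S A \<Longrightarrow> continuous_on S At \<Longrightarrow> continuous_on S As \<Longrightarrow> continuous_on S x \<Longrightarrow>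
   continuous_on S xt \<Longrightarrow> continuous_on S xs \<Longrightarrow> continuous_on S p \<Longrightarrow> continuous_on S P \<Longrightarrow>
   continuous_on S R \<Longrightarrow> continuous_on S m \<Longrightarrow> continuous_on S M \<Longrightarrow>
   continuous_on S (\<lambda>q. rotated_density_deriv (e q) (a q) (u1 q) (u2 q) (A q) (At q) (As q) (x q) (xt q)
     (xs q) (p q) (P q) (R q) (m q) (M q))"
  unfolding rotated_density_deriv_def by (intro continuous_intros)

lemma pt_rotated:
  fixes \<Lambda> :: "mat3 field" and \<eta> :: "vec3 field"
  assumes "C1_field \<Lambda>" "C1_field \<eta>"
  shows "pt (\<lambda>s t. \<Lambda> s t ** so3_exp (e *\<^sub>R \<eta> s t)) s t
    = pt \<Lambda> s t ** so3_exp_powser (e *\<^sub>R \<eta> s t) + \<Lambda> s t ** exp_drift e (\<eta> s t) (pt \<eta> s t)"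
proof -
  have "((\<lambda>\<tau>. e *\<^sub>R \<eta> s \<tau>) has_vector_derivative e *\<^sub>R pt \<eta> s t) (at t)"
    using bounded_linear.has_vector_derivative[OF bounded_linear_scaleR_right C1_field_has_pt[OF assms(2)]] .
  then have "((\<lambda>\<tau>. \<Lambda> s \<tau> ** so3_exp_powser (e *\<^sub>R \<eta> s \<tau>)) has_vector_derivative
      \<Lambda> s t ** so3_exp_deriv (e *\<^sub>R \<eta> s t) (e *\<^sub>R pt \<eta> s t) + pt \<Lambda> s t ** so3_exp_powser (e *\<^sub>R \<eta> s t)) (at t)"
    by (rule has_vector_derivative_matrix_matrix_mult[OF C1_field_has_pt[OF assms(1)] so3_exp_powser_curve])
  then show ?thesis unfolding pt_def so3_exp_eq_powser so3_exp_deriv_scaleR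
    by (simp add: vector_derivative_at add.commute)
qed

lemma ps_rotated:
  fixes \<Lambda> :: "mat3 field" and \<eta> :: "vec3 field"
  assumes "C1_field \<Lambda>" "C1_field \<eta>"
  shows "ps (\<lambda>s t. \<Lambda> s t ** so3_exp (e *\<^sub>R \<eta> s t)) s t
    = ps \<Lambda> s t ** so3_exp_powser (e *\<^sub>R \<eta> s t) + \<Lambda> s t ** exp_drift e (\<eta> s t) (ps \<eta> s t)"
proof -
  have "((\<lambda>\<sigma>. e *\<^sub>R \<eta> \<sigma> t) has_vector_derivative e *\<^sub>R ps \<eta> s t) (at s)"
    using bounded_linear.has_vector_derivative[OF bounded_linear_scaleR_right C1_field_has_ps[OF assms(2)]] .
  then have "((\<lambda>\<sigma>. \<Lambda> \<sigma> t ** so3_exp_powser (e *\<^sub>R \<eta> \<sigma> t)) has_vector_derivative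
      \<Lambda> s t ** so3_exp_deriv (e *\<^sub>R \<eta> s t) (e *\<^sub>R ps \<eta> s t) + ps \<Lambda> s t ** so3_exp_powser (e *\<^sub>R \<eta> s t)) (at s)"
    by (rule has_vector_derivative_matrix_matrix_mult[OF C1_field_has_ps[OF assms(1)] so3_exp_powser_curve])
  then show ?thesis unfolding ps_def so3_exp_eq_powser so3_exp_deriv_scaleR
    by (simp add: vector_derivative_at add.commute)
qed

lemma action_rotated:
  assumes "\<And>s t. orthogonal_matrix (\<Lambda> s t)" "C1_field \<Lambda>" "C1_field \<eta>"
  shows "action L T0 T1 l (\<lambda>s t. \<Lambda> s t ** so3_exp (e *\<^sub>R \<eta> s t)) x w g W G \<rho> \<pi> Pm R \<mu> M
    = lag_int T0 T1 l w g W G \<rho> + dint L T0 T1 (\<lambda>s t. rotated_density e (\<eta> s t) (pt \<eta> s t) (ps \<eta> s t)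
        (\<Lambda> s t) (pt \<Lambda> s t) (ps \<Lambda> s t) (x s t) (pt x s t) (ps x s t)
        (\<pi> s t) (Pm s t) (R s t) (\<mu> s t) (M s t) (w s t) (W s t) (\<rho> s t) (g s t) (G s t))"
proof -
  have orth: "orthogonal_matrix (\<Lambda> s t ** so3_exp (e *\<^sub>R \<eta> s t))" for s t
    using assms(1) orthogonal_matrix_so3_exp_powser by (simp add: so3_exp_eq_powser orthogonal_matrix_mul)
  show ?thesis
    by (subst action_eq_constraint_density[OF orth])
      (unfold pt_rotated[OF assms(2,3)] ps_rotated[OF assms(2,3)],
        simp add: rotated_density_def so3_exp_eq_powser)
qed

section \<open>First variations of the action\<close>

declare transpose_matrix_vector [simp del]

locale rod_action =
  fixes L T0 T1 :: real and l :: lagr and dw dg dW dG dr :: lagr_deriv and \<Lambda> :: "mat3 field"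
    and x w g W G \<rho> \<pi> Pm R \<mu> M :: "vec3 field"
  assumes L_pos: "0 < L" and T_less: "T0 < T1"
    and rotation: "\<forall>s t. rotation_matrix (\<Lambda> s t)"
    and C1_\<Lambda>: "C1_field \<Lambda>" and C1_x: "C1_field x"
    and cont_w: "cont_field w" and cont_g: "cont_field g" and cont_W: "cont_field W"
    and cont_G: "cont_field G" and cont_\<rho>: "cont_field \<rho>"
    and C1_\<pi>: "C1_field \<pi>" and C1_Pm: "C1_field Pm" and cont_R: "cont_field R"
    and C1_\<mu>: "C1_field \<mu>" and C1_M: "C1_field M"
    and lag_derivs: "diff_under_int L T0 T1 l dw dg dW dG dr w g W G \<rho>"
    and cont_grad: "\<forall>d \<in> {dw, dg, dW, dG, dr}. continuous_on (cbox (0, T0) (L, T1))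
           (\<lambda>(s,t). d (\<lambda>s. w s t) (\<lambda>s. g s t) (\<lambda>s. W s t) (\<lambda>s. G s t) (\<lambda>s. \<rho> s t) s)"
begin

abbreviation grad :: "lagr_deriv \<Rightarrow> vec3 field" where
  "grad d s t \<equiv> d (\<lambda>s. w s t) (\<lambda>s. g s t) (\<lambda>s. W s t) (\<lambda>s. G s t) (\<lambda>s. \<rho> s t) s"

abbreviation density :: "real field" where
  "density s t \<equiv> constraint_density (\<Lambda> s t) (pt \<Lambda> s t) (ps \<Lambda> s t) (x s t) (pt x s t) (ps x s t)
     (\<pi> s t) (Pm s t) (R s t) (\<mu> s t) (M s t) (w s t) (W s t) (\<rho> s t) (g s t) (G s t)"

lemma orthogonal_\<Lambda>: "orthogonal_matrix (\<Lambda> s t)"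
  using rotation by (simp add: rotation_matrix_def)

lemma transpose_\<Lambda>_mult: "transpose (\<Lambda> s t) ** \<Lambda> s t = mat 1" "\<Lambda> s t ** transpose (\<Lambda> s t) = mat 1"
  using orthogonal_\<Lambda> by (simp_all add: orthogonal_matrix_def)

lemma matrix_inv_\<Lambda>: "matrix_inv (\<Lambda> s t) = transpose (\<Lambda> s t)"
  by (rule matrix_inv_orthogonal[OF orthogonal_\<Lambda>])

lemmas continuous_fields =
  C1_field_cont[OF C1_\<Lambda>, THEN continuous_on_field] C1_field_cont[OF C1_x, THEN continuous_on_field]
  C1_field_cont[OF C1_\<pi>, THEN continuous_on_field] C1_field_cont[OF C1_Pm, THEN continuous_on_field]
  C1_field_cont[OF C1_\<mu>, THEN continuous_on_field] C1_field_cont[OF C1_M, THEN continuous_on_field]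
  cont_w[THEN continuous_on_field] cont_g[THEN continuous_on_field] cont_W[THEN continuous_on_field]
  cont_G[THEN continuous_on_field] cont_\<rho>[THEN continuous_on_field] cont_R[THEN continuous_on_field]

lemma continuous_test_field:
  assumes "test_field L T0 T1 \<eta>"
  shows "continuous_on A (\<lambda>p. \<eta> (fst p) (snd p))" "continuous_on A (\<lambda>p. pt \<eta> (fst p) (snd p))"
    "continuous_on A (\<lambda>p. ps \<eta> (fst p) (snd p))"
  using C1_field_cont[OF test_field_C1[OF assms], THEN continuous_on_field] by blast+

lemma continuous_grad:
  "d \<in> {dw, dg, dW, dG, dr} \<Longrightarrow> continuous_on (cbox (0,T0) (L,T1)) (\<lambda>p. grad d (fst p) (snd p))"
  using cont_grad by (auto simp: split_beta')

lemma affine_variation: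
  assumes "\<And>e s t. A e s t = density s t + e * H s t"
    and "continuous_on (cbox (0,T0) (L,T1)) (\<lambda>(s,t). H s t)"
    and "(c has_real_derivative D) (at 0)"
  shows "((\<lambda>e. c e + dint L T0 T1 (A e)) has_real_derivative D + dint L T0 T1 H) (at 0)"
proof (rule has_real_derivative_affine_dint[OF assms(1) _ assms(2,3)])
  show "continuous_on (cbox (0,T0) (L,T1)) (\<lambda>(s,t). density s t)"
    unfolding split_beta' by (intro continuous_intros continuous_fields)
qed

lemma first_variation_multipliers:
  assumes \<eta>: "test_field L T0 T1 \<eta>"
  shows "((\<lambda>e. action L T0 T1 l \<Lambda> x w g W G \<rho> (\<lambda>s t. \<pi> s t + e *\<^sub>R \<eta> s t) Pm R \<mu> M) has_real_derivative
      dint L T0 T1 (\<lambda>s t. (vee (transpose (\<Lambda> s t) ** pt \<Lambda> s t) - w s t) \<bullet> \<eta> s t)) (at 0)"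
    and "((\<lambda>e. action L T0 T1 l \<Lambda> x w g W G \<rho> \<pi> (\<lambda>s t. Pm s t + e *\<^sub>R \<eta> s t) R \<mu> M) has_real_derivative
      dint L T0 T1 (\<lambda>s t. (vee (transpose (\<Lambda> s t) ** ps \<Lambda> s t) - W s t) \<bullet> \<eta> s t)) (at 0)"
    and "((\<lambda>e. action L T0 T1 l \<Lambda> x w g W G \<rho> \<pi> Pm (\<lambda>s t. R s t + e *\<^sub>R \<eta> s t) \<mu> M) has_real_derivative
      dint L T0 T1 (\<lambda>s t. (transpose (\<Lambda> s t) *v x s t - \<rho> s t) \<bullet> \<eta> s t)) (at 0)"
    and "((\<lambda>e. action L T0 T1 l \<Lambda> x w g W G \<rho> \<pi> Pm R (\<lambda>s t. \<mu> s t + e *\<^sub>R \<eta> s t) M) has_real_derivative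
      dint L T0 T1 (\<lambda>s t. (transpose (\<Lambda> s t) *v pt x s t - g s t) \<bullet> \<eta> s t)) (at 0)"
    and "((\<lambda>e. action L T0 T1 l \<Lambda> x w g W G \<rho> \<pi> Pm R \<mu> (\<lambda>s t. M s t + e *\<^sub>R \<eta> s t)) has_real_derivative
      dint L T0 T1 (\<lambda>s t. (transpose (\<Lambda> s t) *v ps x s t - G s t) \<bullet> \<eta> s t)) (at 0)"
  unfolding action_eq_constraint_density[OF orthogonal_\<Lambda>]
  by (rule DERIV_cong[OF affine_variation[OF _ _ DERIV_const]];
      auto simp: constraint_density_def inner_add_left inner_commute split_beta'
        intro!: continuous_intros continuous_fields continuous_test_field[OF \<eta>])+

lemma lagrangian_variation:
  assumes "\<And>e s t. A e s t = density s t - e * (p s t \<bullet> \<eta> s t)"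
    and p: "continuous_on (cbox (0,T0) (L,T1)) (\<lambda>q. p (fst q) (snd q))"
    and \<eta>: "test_field L T0 T1 \<eta>" and d: "d \<in> {dw, dg, dW, dG, dr}"
    and "(c has_real_derivative dint L T0 T1 (\<lambda>s t. grad d s t \<bullet> \<eta> s t)) (at 0)"
  shows "((\<lambda>e. c e + dint L T0 T1 (A e)) has_real_derivative
    dint L T0 T1 (\<lambda>s t. (grad d s t - p s t) \<bullet> \<eta> s t)) (at 0)"
proof -
  have "continuous_on (cbox (0,T0) (L,T1)) (\<lambda>(s,t). grad d s t \<bullet> \<eta> s t)"
    "continuous_on (cbox (0,T0) (L,T1)) (\<lambda>(s,t). p s t \<bullet> \<eta> s t)"
    unfolding split_beta' using p d
    by (intro continuous_intros continuous_grad continuous_test_field[OF \<eta>]; simp)+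
  then have "dint L T0 T1 (\<lambda>s t. grad d s t \<bullet> \<eta> s t) + dint L T0 T1 (\<lambda>s t. - (p s t \<bullet> \<eta> s t))
      = dint L T0 T1 (\<lambda>s t. (grad d s t - p s t) \<bullet> \<eta> s t)"
    by (simp add: dint_diff dint_minus inner_diff_left)
  moreover have "continuous_on (cbox (0,T0) (L,T1)) (\<lambda>(s,t). - (p s t \<bullet> \<eta> s t))"
    unfolding split_beta' by (intro continuous_intros p continuous_test_field[OF \<eta>])
  ultimately show ?thesis
    using affine_variation[where H="\<lambda>s t. - (p s t \<bullet> \<eta> s t)", OF _ _ assms(5)] assms(1) by simp
qed

lemma first_variation_reduced:
  assumes \<eta>: "test_field L T0 T1 \<eta>"
  shows "((\<lambda>e. action L T0 T1 l \<Lambda> x (\<lambda>s t. w s t + e *\<^sub>R \<eta> s t) g W G \<rho> \<pi> Pm R \<mu> M) has_real_derivative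
      dint L T0 T1 (\<lambda>s t. (grad dw s t - \<pi> s t) \<bullet> \<eta> s t)) (at 0)"
    and "((\<lambda>e. action L T0 T1 l \<Lambda> x w (\<lambda>s t. g s t + e *\<^sub>R \<eta> s t) W G \<rho> \<pi> Pm R \<mu> M) has_real_derivative
      dint L T0 T1 (\<lambda>s t. (grad dg s t - \<mu> s t) \<bullet> \<eta> s t)) (at 0)"
    and "((\<lambda>e. action L T0 T1 l \<Lambda> x w g (\<lambda>s t. W s t + e *\<^sub>R \<eta> s t) G \<rho> \<pi> Pm R \<mu> M) has_real_derivative
      dint L T0 T1 (\<lambda>s t. (grad dW s t - Pm s t) \<bullet> \<eta> s t)) (at 0)"
    and "((\<lambda>e. action L T0 T1 l \<Lambda> x w g W (\<lambda>s t. G s t + e *\<^sub>R \<eta> s t) \<rho> \<pi> Pm R \<mu> M) has_real_derivative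
      dint L T0 T1 (\<lambda>s t. (grad dG s t - M s t) \<bullet> \<eta> s t)) (at 0)"
    and "((\<lambda>e. action L T0 T1 l \<Lambda> x w g W G (\<lambda>s t. \<rho> s t + e *\<^sub>R \<eta> s t) \<pi> Pm R \<mu> M) has_real_derivative
      dint L T0 T1 (\<lambda>s t. (grad dr s t - R s t) \<bullet> \<eta> s t)) (at 0)"
  unfolding action_eq_constraint_density[OF orthogonal_\<Lambda>]
  by (rule lagrangian_variation[OF _ _ \<eta>];
      use lag_derivs[unfolded diff_under_int_def Let_def, rule_format, OF \<eta>] in
        \<open>auto intro!: continuous_fields simp: constraint_density_def inner_diff_right algebra_simps\<close>)+

lemma first_variation_position:
  assumes \<eta>: "test_field L T0 T1 \<eta>"
  shows "((\<lambda>e. action L T0 T1 l \<Lambda> (\<lambda>s t. x s t + e *\<^sub>R \<eta> s t) w g W G \<rho> \<pi> Pm R \<mu> M) has_real_derivative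
    dint L T0 T1 (\<lambda>s t. (\<Lambda> s t *v R s t - pt (\<lambda>s t. \<Lambda> s t *v \<mu> s t) s t
      - ps (\<lambda>s t. \<Lambda> s t *v M s t) s t) \<bullet> \<eta> s t)) (at 0)"
proof -
  note \<eta>' = test_field_C1[OF \<eta>]
  have "((\<lambda>e. action L T0 T1 l \<Lambda> (\<lambda>s t. x s t + e *\<^sub>R \<eta> s t) w g W G \<rho> \<pi> Pm R \<mu> M) has_real_derivative
      dint L T0 T1 (\<lambda>s t. (\<Lambda> s t *v R s t) \<bullet> \<eta> s t + (\<Lambda> s t *v \<mu> s t) \<bullet> pt \<eta> s t
        + (\<Lambda> s t *v M s t) \<bullet> ps \<eta> s t)) (at 0)"
    unfolding action_eq_constraint_density[OF orthogonal_\<Lambda>] pt_add_scaleR[OF C1_x \<eta>']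
      ps_add_scaleR[OF C1_x \<eta>']
    by (rule DERIV_cong[OF affine_variation[OF _ _ DERIV_const]];
        auto simp: constraint_density_def inner_transpose_mult_vector[symmetric] inner_add_right
          matrix_vector_right_distrib scaleR_matrix_vector_assoc[symmetric] split_beta' algebra_simps
          intro!: continuous_intros continuous_fields continuous_test_field[OF \<eta>])
  moreover have "continuous_on (cbox (0,T0) (L,T1)) (\<lambda>(s,t). \<Lambda> s t *v R s t)"
    unfolding split_beta' by (intro continuous_intros continuous_fields)
  ultimately show ?thesis
    using dint_by_parts[OF _ C1_field_matrix_vector_mult(1)[OF C1_\<Lambda> C1_\<mu>]
        C1_field_matrix_vector_mult(1)[OF C1_\<Lambda> C1_M] \<eta>] L_pos T_less
    by simp
qed

definition constrained :: "real \<Rightarrow> real \<Rightarrow> bool" where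
  "constrained s t \<longleftrightarrow> transpose (\<Lambda> s t) ** pt \<Lambda> s t = hat (w s t)
    \<and> transpose (\<Lambda> s t) ** ps \<Lambda> s t = hat (W s t) \<and> transpose (\<Lambda> s t) *v x s t = \<rho> s t
    \<and> transpose (\<Lambda> s t) *v pt x s t = g s t \<and> transpose (\<Lambda> s t) *v ps x s t = G s t"

definition angular_balance :: "vec3 field" where
  "angular_balance s t = pt \<pi> s t + cross3 (w s t) (\<pi> s t) + ps Pm s t + cross3 (W s t) (Pm s t)
     + cross3 (g s t) (\<mu> s t) + cross3 (G s t) (M s t) + cross3 (\<rho> s t) (R s t)"

definition linear_balance :: "vec3 field" where
  "linear_balance s t = pt \<mu> s t + cross3 (w s t) (\<mu> s t) + ps M s t + cross3 (W s t) (M s t) - R s t"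

lemma first_variation_rotation:
  assumes \<eta>: "test_field L T0 T1 \<eta>" and constrained: "\<forall>s\<in>{0..L}. \<forall>t\<in>{T0..T1}. constrained s t"
  shows "((\<lambda>e. action L T0 T1 l (\<lambda>s t. \<Lambda> s t ** so3_exp (e *\<^sub>R \<eta> s t)) x w g W G \<rho> \<pi> Pm R \<mu> M)
    has_real_derivative dint L T0 T1 (\<lambda>s t. - angular_balance s t \<bullet> \<eta> s t)) (at 0)"
proof -
  note fields = continuous_fields continuous_test_field[OF \<eta>]
  note fields' = C1_field_cont[OF C1_\<Lambda>, THEN continuous_on_field_snd]
    C1_field_cont[OF C1_x, THEN continuous_on_field_snd] C1_field_cont[OF C1_\<pi>, THEN continuous_on_field_snd]
    C1_field_cont[OF C1_Pm, THEN continuous_on_field_snd] C1_field_cont[OF C1_\<mu>, THEN continuous_on_field_snd]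
    C1_field_cont[OF C1_M, THEN continuous_on_field_snd] cont_R[THEN continuous_on_field_snd]
    C1_field_cont[OF test_field_C1[OF \<eta>], THEN continuous_on_field_snd]
  let ?c = "\<lambda>s t. - (cross3 (w s t) (\<pi> s t) + cross3 (W s t) (Pm s t) + cross3 (g s t) (\<mu> s t)
    + cross3 (G s t) (M s t) + cross3 (\<rho> s t) (R s t))"
  have "((\<lambda>e. dint L T0 T1 (\<lambda>s t. rotated_density e (\<eta> s t) (pt \<eta> s t) (ps \<eta> s t)
      (\<Lambda> s t) (pt \<Lambda> s t) (ps \<Lambda> s t) (x s t) (pt x s t) (ps x s t)
      (\<pi> s t) (Pm s t) (R s t) (\<mu> s t) (M s t) (w s t) (W s t) (\<rho> s t) (g s t) (G s t)))
    has_real_derivative dint L T0 T1 (\<lambda>s t. rotated_density_deriv 0 (\<eta> s t) (pt \<eta> s t) (ps \<eta> s t)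
      (\<Lambda> s t) (pt \<Lambda> s t) (ps \<Lambda> s t) (x s t) (pt x s t) (ps x s t)
      (\<pi> s t) (Pm s t) (R s t) (\<mu> s t) (M s t))) (at 0)"
    by (rule dint_has_real_derivative[OF rotated_density_has_real_derivative])
      (unfold split_beta'; intro continuous_intros fields fields')+
  also have "dint L T0 T1 (\<lambda>s t. rotated_density_deriv 0 (\<eta> s t) (pt \<eta> s t) (ps \<eta> s t)
      (\<Lambda> s t) (pt \<Lambda> s t) (ps \<Lambda> s t) (x s t) (pt x s t) (ps x s t)
      (\<pi> s t) (Pm s t) (R s t) (\<mu> s t) (M s t))
    = dint L T0 T1 (\<lambda>s t. ?c s t \<bullet> \<eta> s t + \<pi> s t \<bullet> pt \<eta> s t + Pm s t \<bullet> ps \<eta> s t)"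
    using constrained
    by (intro dint_cong) (simp add: constrained_def rotated_density_deriv_0 transpose_\<Lambda>_mult)
  also have "\<dots> = dint L T0 T1 (\<lambda>s t. (?c s t - pt \<pi> s t - ps Pm s t) \<bullet> \<eta> s t)"
  proof (rule dint_by_parts[OF _ C1_\<pi> C1_Pm \<eta>])
    show "continuous_on (cbox (0,T0) (L,T1)) (\<lambda>(s,t). ?c s t)"
      unfolding split_beta' by (intro continuous_intros fields)
  qed (use L_pos T_less in auto)
  also have "\<dots> = dint L T0 T1 (\<lambda>s t. - angular_balance s t \<bullet> \<eta> s t)"
    by (intro dint_cong) (simp add: angular_balance_def algebra_simps)
  finally show ?thesis
    unfolding action_rotated[OF orthogonal_\<Lambda> C1_\<Lambda> test_field_C1[OF \<eta>]]
    using DERIV_add[OF DERIV_const] by fastforce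
qed

lemma constrained_iff_residuals:
  "constrained s t \<longleftrightarrow> vee (transpose (\<Lambda> s t) ** pt \<Lambda> s t) - w s t = 0
    \<and> vee (transpose (\<Lambda> s t) ** ps \<Lambda> s t) - W s t = 0 \<and> transpose (\<Lambda> s t) *v x s t - \<rho> s t = 0
    \<and> transpose (\<Lambda> s t) *v pt x s t - g s t = 0 \<and> transpose (\<Lambda> s t) *v ps x s t - G s t = 0"
proof -
  have "transpose (\<Lambda> s t) ** pt \<Lambda> s t = hat (vee (transpose (\<Lambda> s t) ** pt \<Lambda> s t))"
    "transpose (\<Lambda> s t) ** ps \<Lambda> s t = hat (vee (transpose (\<Lambda> s t) ** ps \<Lambda> s t))"
    using skew_transpose_mult_derivative[of "\<lambda>\<tau>. \<Lambda> s \<tau>", OF transpose_\<Lambda>_mult(1) C1_field_has_pt[OF C1_\<Lambda>]]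
      skew_transpose_mult_derivative[of "\<lambda>\<sigma>. \<Lambda> \<sigma> t", OF transpose_\<Lambda>_mult(1) C1_field_has_ps[OF C1_\<Lambda>]]
    by (simp_all add: hat_vee)
  then show ?thesis
    unfolding constrained_def by (metis right_minus_eq vee_hat)
qed

lemma position_density_eq:
  assumes "constrained s t"
  shows "\<Lambda> s t *v R s t - pt (\<lambda>s t. \<Lambda> s t *v \<mu> s t) s t - ps (\<lambda>s t. \<Lambda> s t *v M s t) s t
    = - (\<Lambda> s t *v linear_balance s t)"
proof -
  from assms have "\<Lambda> s t ** (transpose (\<Lambda> s t) ** pt \<Lambda> s t) = \<Lambda> s t ** hat (w s t)"
    "\<Lambda> s t ** (transpose (\<Lambda> s t) ** ps \<Lambda> s t) = \<Lambda> s t ** hat (W s t)"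
    by (simp_all add: constrained_def)
  then have "pt \<Lambda> s t = \<Lambda> s t ** hat (w s t)" "ps \<Lambda> s t = \<Lambda> s t ** hat (W s t)"
    by (simp_all add: matrix_mul_assoc transpose_\<Lambda>_mult(2))
  then show ?thesis
    by (simp add: C1_field_matrix_vector_mult(2,3)[OF C1_\<Lambda>] C1_\<mu> C1_M linear_balance_def
        matrix_vector_mul_assoc[symmetric] hat_mult_vector matrix_vector_right_distrib
        matrix_vector_mult_diff_distrib algebra_simps)
qed

lemma position_density_vanishes_iff:
  assumes "\<forall>s\<in>{0..L}. \<forall>t\<in>{T0..T1}. constrained s t"
  shows "(\<forall>s\<in>{0..L}. \<forall>t\<in>{T0..T1}.
      \<Lambda> s t *v R s t - pt (\<lambda>s t. \<Lambda> s t *v \<mu> s t) s t - ps (\<lambda>s t. \<Lambda> s t *v M s t) s t = 0)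
    \<longleftrightarrow> (\<forall>s\<in>{0..L}. \<forall>t\<in>{T0..T1}. linear_balance s t = 0)"
proof -
  have inv: "transpose (\<Lambda> s t) *v (\<Lambda> s t *v v) = v" for s t v
    by (simp add: matrix_vector_mul_assoc transpose_\<Lambda>_mult(1))
  have "\<Lambda> s t *v R s t - pt (\<lambda>s t. \<Lambda> s t *v \<mu> s t) s t - ps (\<lambda>s t. \<Lambda> s t *v M s t) s t = 0
      \<longleftrightarrow> linear_balance s t = 0" if "s \<in> {0..L}" "t \<in> {T0..T1}" for s t
    unfolding position_density_eq[OF assms[rule_format, OF that]]
    by (metis inv matrix_vector_mult_0_right neg_equal_0_iff_equal)
  then show ?thesis by simp
qed

lemma continuous_densities:
  "continuous_on (cbox (0,T0) (L,T1)) (\<lambda>(s,t). vee (transpose (\<Lambda> s t) ** pt \<Lambda> s t) - w s t)"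
  "continuous_on (cbox (0,T0) (L,T1)) (\<lambda>(s,t). vee (transpose (\<Lambda> s t) ** ps \<Lambda> s t) - W s t)"
  "continuous_on (cbox (0,T0) (L,T1)) (\<lambda>(s,t). transpose (\<Lambda> s t) *v x s t - \<rho> s t)"
  "continuous_on (cbox (0,T0) (L,T1)) (\<lambda>(s,t). transpose (\<Lambda> s t) *v pt x s t - g s t)"
  "continuous_on (cbox (0,T0) (L,T1)) (\<lambda>(s,t). transpose (\<Lambda> s t) *v ps x s t - G s t)"
  "continuous_on (cbox (0,T0) (L,T1)) (\<lambda>(s,t). grad dw s t - \<pi> s t)"
  "continuous_on (cbox (0,T0) (L,T1)) (\<lambda>(s,t). grad dg s t - \<mu> s t)"
  "continuous_on (cbox (0,T0) (L,T1)) (\<lambda>(s,t). grad dW s t - Pm s t)"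
  "continuous_on (cbox (0,T0) (L,T1)) (\<lambda>(s,t). grad dG s t - M s t)"
  "continuous_on (cbox (0,T0) (L,T1)) (\<lambda>(s,t). grad dr s t - R s t)"
  "continuous_on (cbox (0,T0) (L,T1)) (\<lambda>(s,t). \<Lambda> s t *v R s t - pt (\<lambda>s t. \<Lambda> s t *v \<mu> s t) s t
     - ps (\<lambda>s t. \<Lambda> s t *v M s t) s t)"
  "continuous_on (cbox (0,T0) (L,T1)) (\<lambda>(s,t). - angular_balance s t)"
  unfolding split_beta' angular_balance_def
  by (intro continuous_intros continuous_fields continuous_grad
      C1_field_cont[OF C1_field_matrix_vector_mult(1)[OF C1_\<Lambda> C1_\<mu>], THEN continuous_on_field]
      C1_field_cont[OF C1_field_matrix_vector_mult(1)[OF C1_\<Lambda> C1_M], THEN continuous_on_field]; simp)+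

lemmas variation_vanishes_iff = first_variation_vanishes_iff[OF L_pos T_less]

lemma rotation_variation_vanishes_iff:
  assumes "\<forall>s\<in>{0..L}. \<forall>t\<in>{T0..T1}. constrained s t"
  shows "(\<forall>\<eta>. test_field L T0 T1 \<eta> \<longrightarrow> ((\<lambda>e. action L T0 T1 l (\<lambda>s t. \<Lambda> s t ** so3_exp (e *\<^sub>R \<eta> s t))
      x w g W G \<rho> \<pi> Pm R \<mu> M) has_real_derivative 0) (at 0))
    \<longleftrightarrow> (\<forall>s\<in>{0..L}. \<forall>t\<in>{T0..T1}. angular_balance s t = 0)"
  using variation_vanishes_iff[OF continuous_densities(12) first_variation_rotation[OF _ assms]] by simp

lemma stationary_iff:
  "stationary L T0 T1 l \<Lambda> x w g W G \<rho> \<pi> Pm R \<mu> M \<longleftrightarrow> (\<forall>s\<in>{0..L}. \<forall>t\<in>{T0..T1}.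
    grad dr s t - R s t = 0 \<and> grad dw s t - \<pi> s t = 0 \<and> grad dW s t - Pm s t = 0 \<and>
    grad dg s t - \<mu> s t = 0 \<and> grad dG s t - M s t = 0 \<and>
    angular_balance s t = 0 \<and> linear_balance s t = 0 \<and> constrained s t)"
  (is "_ \<longleftrightarrow> ?equations")
proof -
  note others = variation_vanishes_iff[OF continuous_densities(11) first_variation_position]
    variation_vanishes_iff[OF continuous_densities(6) first_variation_reduced(1)]
    variation_vanishes_iff[OF continuous_densities(7) first_variation_reduced(2)]
    variation_vanishes_iff[OF continuous_densities(8) first_variation_reduced(3)]
    variation_vanishes_iff[OF continuous_densities(9) first_variation_reduced(4)]
    variation_vanishes_iff[OF continuous_densities(10) first_variation_reduced(5)]
    variation_vanishes_iff[OF continuous_densities(1) first_variation_multipliers(1)]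
    variation_vanishes_iff[OF continuous_densities(2) first_variation_multipliers(2)]
    variation_vanishes_iff[OF continuous_densities(3) first_variation_multipliers(3)]
    variation_vanishes_iff[OF continuous_densities(4) first_variation_multipliers(4)]
    variation_vanishes_iff[OF continuous_densities(5) first_variation_multipliers(5)]
  show ?thesis
  proof (cases "\<forall>s\<in>{0..L}. \<forall>t\<in>{T0..T1}. constrained s t")
    case True
    then show ?thesis
      by (simp only: stationary_def Let_def all_imp_conj_distrib others
          rotation_variation_vanishes_iff[OF True] position_density_vanishes_iff[OF True])
        (use True[unfolded constrained_iff_residuals] in auto)
  next
    case False
    then show ?thesis
      by (simp only: stationary_def Let_def all_imp_conj_distrib others)
        (auto simp: constrained_iff_residuals)
  qed
qed

end

theorem mainTheorem2:
  fixes L T0 T1 :: real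
    and l :: lagr and dw dg dW dG dr :: lagr_deriv
    and \<Lambda> :: "mat3 field"
    and x w g W G \<rho> \<pi> Pm R \<mu> M :: "vec3 field"
  assumes "0 < L" and "T0 < T1"
    and "\<forall>s t. rotation_matrix (\<Lambda> s t)"
    and "C1_field \<Lambda>" and "C1_field x"
    and "cont_field w" and "cont_field g" and "cont_field W" and "cont_field G" and "cont_field \<rho>"
    and "C1_field \<pi>" and "C1_field Pm" and "cont_field R" and "C1_field \<mu>" and "C1_field M"
    and "functional_derivs L l dw dg dW dG dr"
    and "diff_under_int L T0 T1 l dw dg dW dG dr w g W G \<rho>"
    and "\<forall>d \<in> {dw, dg, dW, dG, dr}. continuous_on (cbox (0, T0) (L, T1))
           (\<lambda>(s,t). d (\<lambda>s. w s t) (\<lambda>s. g s t) (\<lambda>s. W s t) (\<lambda>s. G s t) (\<lambda>s. \<rho> s t) s)"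
  shows "stationary L T0 T1 l \<Lambda> x w g W G \<rho> \<pi> Pm R \<mu> M \<longleftrightarrow>
    (\<forall>s \<in> {0..L}. \<forall>t \<in> {T0..T1}.
      (let args = (\<lambda>d. d (\<lambda>s. w s t) (\<lambda>s. g s t) (\<lambda>s. W s t) (\<lambda>s. G s t) (\<lambda>s. \<rho> s t) s) in
        args dr - R s t = 0 \<and>
        args dw - \<pi> s t = 0 \<and>
        args dW - Pm s t = 0 \<and>
        args dg - \<mu> s t = 0 \<and>
        args dG - M s t = 0 \<and>
        pt \<pi> s t + cross3 (w s t) (\<pi> s t) + ps Pm s t + cross3 (W s t) (Pm s t)
          + cross3 (g s t) (\<mu> s t) + cross3 (G s t) (M s t) + cross3 (\<rho> s t) (R s t) = 0 \<and>
        pt \<mu> s t + cross3 (w s t) (\<mu> s t) + ps M s t + cross3 (W s t) (M s t) - R s t = 0 \<and>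
        matrix_inv (\<Lambda> s t) ** pt \<Lambda> s t = hat (w s t) \<and>
        matrix_inv (\<Lambda> s t) ** ps \<Lambda> s t = hat (W s t) \<and>
        matrix_inv (\<Lambda> s t) *v x s t = \<rho> s t \<and>
        matrix_inv (\<Lambda> s t) *v pt x s t = g s t \<and>
        matrix_inv (\<Lambda> s t) *v ps x s t = G s t))"
proof -
  interpret rod_action L T0 T1 l dw dg dW dG dr \<Lambda> x w g W G \<rho> \<pi> Pm R \<mu> M
    using assms(1-15,17,18) by unfold_locales
  show ?thesis
    unfolding stationary_iff Let_def matrix_inv_\<Lambda> angular_balance_def linear_balance_def constrained_def
    by (rule refl)
qed
end
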